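(* Let $\Sigma=(B,\sigma)$ be a signed graph whose underlying graph $B$ is a block that is neither a single edge nor a circle, and suppose $[e,C,-]$ is a negative battery. (Then $B$ is $C$-layered, $e$ lies in one handle of $C$, and the other handle $H$ of $C$ contains a balancing edge; call $H$ the balancing handle.) Let $f$ be an edge of $B$ not in $C$, and let $D$ be the bridge of $C$ containing $f$. Then $f$ is a negative battery (i.e. lies in exactly one negative circle) if and only if there is exactly one path through $D$ that contains $f$.
   Context: A signed graph $\Sigma=(G,\sigma)$ is a finite graph $G$ with signature $\sigma:E(G)\to\{+,-\}$. A circle is a connected 2-regular subgraph; its sign is the product of its edge signs. Switching by $\zeta:V(G)\to\{+,-\}$ replaces $\sigma(e)$ by $\zeta(u)\sigma(e)\zeta(w)$. An edge $b$ is a balancing edge if $\Sigma$ can be switched so that $b$ is the only negative edge. A block is a maximal subgraph without a cutpoint. For a circle $C$, a chord is an edge not in $C$ joining two distinct vertices of $C$; a bridge of $C$ is either a chord or a connected component $D$ of $G\setminus V(C)$ together with all edges joining $D$ to $C$; its vertices of attachment are its vertices on $C$; a path through a bridge $D$ is a path in $D$ whose endpoints are two distinct vertices of attachment of $D$. Two chords cross if together with $C$ they form a subdivision of $K_4$. Endpoints of chords partition $C$ into segments; a segment is a handle if its endpoints are joined by a chord. If every bridge of $C$ has exactly two vertices of attachment, $C^*$ is obtained from $C$ by adding, for each bridge, one chord joining its vertices of attachment; handles of $C$ are those determined by $C^*$. The graph is $C$-layered if every bridge of $C$ has exactly two vertices of attachment and in $C^*$ no two chords cross and there are exactly two handles.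 $[e,C,-]$ means $C$ is a negative circle containing $e$ and the only negative circle containing $e$. *)

theory Defs
  imports Main
begin

text \<open>A finite loopless multigraph: vertex set V, edge set E, and an incidence
  map ends assigning to each edge its set of two distinct endpoints.
  A signature sigma assigns +1 or -1 to each edge.\<close>

definition graph :: "'v set \<Rightarrow> 'e set \<Rightarrow> ('e \<Rightarrow> 'v set) \<Rightarrow> bool" where
  "graph V E ends \<longleftrightarrow> finite V \<and> finite E \<and>
     (\<forall>e\<in>E. ends e \<subseteq> V \<and> card (ends e) = 2)"

definition signed_graph :: "'v set \<Rightarrow> 'e set \<Rightarrow> ('e \<Rightarrow> 'v set) \<Rightarrow> ('e \<Rightarrow> int) \<Rightarrow> bool" where
  "signed_graph V E ends \<sigma> \<longleftrightarrow> graph V E ends \<and> (\<forall>e\<in>E. \<sigma> e = 1 \<or> \<sigma> e = -1)"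

definition verts_of :: "('e \<Rightarrow> 'v set) \<Rightarrow> 'e set \<Rightarrow> 'v set" where
  "verts_of ends S = \<Union> (ends ` S)"

definition deg :: "('e \<Rightarrow> 'v set) \<Rightarrow> 'e set \<Rightarrow> 'v \<Rightarrow> nat" where
  "deg ends S v = card {e\<in>S. v \<in> ends e}"

definition edge_connected :: "('e \<Rightarrow> 'v set) \<Rightarrow> 'e set \<Rightarrow> bool" where
  "edge_connected ends S \<longleftrightarrow>
     (\<forall>e\<in>S. \<forall>g\<in>S. (e, g) \<in> {(a, b). a \<in> S \<and> b \<in> S \<and> ends a \<inter> ends b \<noteq> {}}\<^sup>*)"

definition is_circle :: "'e set \<Rightarrow> ('e \<Rightarrow> 'v set) \<Rightarrow> 'e set \<Rightarrow> bool" where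
  "is_circle E ends C \<longleftrightarrow> C \<subseteq> E \<and> C \<noteq> {} \<and> finite C \<and>
     (\<forall>v\<in>verts_of ends C. deg ends C v = 2) \<and> edge_connected ends C"

definition circ_sign :: "('e \<Rightarrow> int) \<Rightarrow> 'e set \<Rightarrow> int" where
  "circ_sign \<sigma> C = (\<Prod>e\<in>C. \<sigma> e)"

text \<open>[e,C,-]: C is a negative circle containing e and the only one.\<close>
definition neg_battery_circ :: "'e set \<Rightarrow> ('e \<Rightarrow> 'v set) \<Rightarrow> ('e \<Rightarrow> int) \<Rightarrow> 'e \<Rightarrow> 'e set \<Rightarrow> bool" where
  "neg_battery_circ E ends \<sigma> e C \<longleftrightarrow>
     is_circle E ends C \<and> circ_sign \<sigma> C = -1 \<and> e \<in> C \<and>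
     (\<forall>C'. is_circle E ends C' \<and> circ_sign \<sigma> C' = -1 \<and> e \<in> C' \<longrightarrow> C' = C)"

definition neg_battery :: "'e set \<Rightarrow> ('e \<Rightarrow> 'v set) \<Rightarrow> ('e \<Rightarrow> int) \<Rightarrow> 'e \<Rightarrow> bool" where
  "neg_battery E ends \<sigma> f \<longleftrightarrow>
     (\<exists>!C. is_circle E ends C \<and> circ_sign \<sigma> C = -1 \<and> f \<in> C)"

definition adj_avoid :: "'e set \<Rightarrow> ('e \<Rightarrow> 'v set) \<Rightarrow> 'v set \<Rightarrow> ('v \<times> 'v) set" where
  "adj_avoid E ends X = {(a, b). \<exists>g\<in>E. ends g = {a, b} \<and> a \<notin> X \<and> b \<notin> X}"

definition connected_graph :: "'v set \<Rightarrow> 'e set \<Rightarrow> ('e \<Rightarrow> 'v set) \<Rightarrow> bool" where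
  "connected_graph V E ends \<longleftrightarrow> (\<forall>u\<in>V. \<forall>w\<in>V. (u, w) \<in> (adj_avoid E ends {})\<^sup>*)"

definition cutpoint :: "'v set \<Rightarrow> 'e set \<Rightarrow> ('e \<Rightarrow> 'v set) \<Rightarrow> 'v \<Rightarrow> bool" where
  "cutpoint V E ends v \<longleftrightarrow> v \<in> V \<and>
     \<not> (\<forall>u\<in>V - {v}. \<forall>w\<in>V - {v}. (u, w) \<in> (adj_avoid E ends {v})\<^sup>*)"

definition is_block :: "'v set \<Rightarrow> 'e set \<Rightarrow> ('e \<Rightarrow> 'v set) \<Rightarrow> bool" where
  "is_block V E ends \<longleftrightarrow> V \<noteq> {} \<and> connected_graph V E ends \<and> (\<forall>v\<in>V. \<not> cutpoint V E ends v)"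

text \<open>The edge set of the bridge of circle C containing an edge f not in C:
  either the chord f itself, or all edges meeting the component of G - V(C)
  that contains an endpoint of f off C (i.e. that component together with the
  edges joining it to C).\<close>
definition bridge_comp :: "'v set \<Rightarrow> 'e set \<Rightarrow> ('e \<Rightarrow> 'v set) \<Rightarrow> 'e set \<Rightarrow> 'e \<Rightarrow> 'v set" where
  "bridge_comp V E ends C f =
     {y \<in> V - verts_of ends C. \<exists>x\<in>ends f - verts_of ends C.
        (x, y) \<in> (adj_avoid E ends (verts_of ends C))\<^sup>*}"

definition bridge_edges :: "'v set \<Rightarrow> 'e set \<Rightarrow> ('e \<Rightarrow> 'v set) \<Rightarrow> 'e set \<Rightarrow> 'e \<Rightarrow> 'e set" where
  "bridge_edges V E ends C f =
     (if ends f \<subseteq> verts_of ends C then {f}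
      else {g \<in> E - C. ends g \<inter> bridge_comp V E ends C f \<noteq> {}})"

definition attachments :: "'v set \<Rightarrow> 'e set \<Rightarrow> ('e \<Rightarrow> 'v set) \<Rightarrow> 'e set \<Rightarrow> 'e \<Rightarrow> 'v set" where
  "attachments V E ends C f = verts_of ends (bridge_edges V E ends C f) \<inter> verts_of ends C"

definition is_path :: "'e set \<Rightarrow> ('e \<Rightarrow> 'v set) \<Rightarrow> 'v list \<Rightarrow> 'e list \<Rightarrow> bool" where
  "is_path D ends vs es \<longleftrightarrow> length vs = Suc (length es) \<and> distinct vs \<and>
     (\<forall>i < length es. es ! i \<in> D \<and> ends (es ! i) = {vs ! i, vs ! Suc i})"

text \<open>Paths through the bridge D of C containing f, each taken as a subgraph
  (represented by its edge set): paths in D whose two (distinct) endpoints are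
  vertices of attachment of D.\<close>
definition paths_through :: "'v set \<Rightarrow> 'e set \<Rightarrow> ('e \<Rightarrow> 'v set) \<Rightarrow> 'e set \<Rightarrow> 'e \<Rightarrow> 'e set set" where
  "paths_through V E ends C f =
     {set es | vs es. is_path (bridge_edges V E ends C f) ends vs es \<and>
        hd vs \<noteq> last vs \<and>
        hd vs \<in> attachments V E ends C f \<and> last vs \<in> attachments V E ends C f}"

end

theory Submission
  imports Defs "HOL-Library.Transitive_Closure_Table"
begin

text \<open>
  Call a path outside C joining two distinct vertices of C and meeting C nowhere else an ear.
  An ear P cuts C into two arcs; the two circles formed by P and an arc multiply to the sign of C,
  and the one through e is not C, hence positive, so the other is a negative circle through P
  avoiding e. Conversely, a negative circle Z through f \<notin> C is an ear through f plus part of C: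
  two disjoint paths from the ends of e to Z (Menger, as B is 2-connected) close up with e and
  either arc of Z into two circles whose symmetric difference is Z, so one of them is negative and
  must be C. Two circles avoiding e that agree off C coincide, since their symmetric difference is
  an even subgraph of C missing e. Hence f is a negative battery iff all ears through f have the
  same edges. Every ear through f is a path through the bridge D of f, and when f is a battery
  every path through D containing f is an ear: an inner vertex on C would be a third attachment
  of D, from which a second ear through f could be routed.
\<close>

section \<open>Paths as vertex lists\<close>

definition vpath :: "('v \<Rightarrow> 'v \<Rightarrow> bool) \<Rightarrow> 'v list \<Rightarrow> bool" where
  "vpath r vs \<longleftrightarrow> vs \<noteq> [] \<and> distinct vs \<and> successively r vs"

definition vpath_between :: "('v \<Rightarrow> 'v \<Rightarrow> bool) \<Rightarrow> 'v set \<Rightarrow> 'v set \<Rightarrow> 'v list \<Rightarrow> bool" where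
  "vpath_between r S T vs \<longleftrightarrow> vpath r vs \<and> hd vs \<in> S \<and> last vs \<in> T"

lemma vpath_singleton [simp]: "vpath r [x]"
  by (simp add: vpath_def)

lemma vpath_prefix: "vpath r (xs @ ys) \<Longrightarrow> xs \<noteq> [] \<Longrightarrow> vpath r xs"
  by (simp add: vpath_def successively_append_iff)

lemma vpath_suffix: "vpath r (xs @ ys) \<Longrightarrow> ys \<noteq> [] \<Longrightarrow> vpath r ys"
  by (simp add: vpath_def successively_append_iff)

lemma vpath_append:
  assumes "vpath r (xs @ [x])" "vpath r (x # ys)" "set xs \<inter> set (x # ys) = {}"
  shows "vpath r (xs @ x # ys)"
  using assms by (cases ys) (auto simp: vpath_def successively_append_iff)

lemma vpath_snoc: "vpath r xs \<Longrightarrow> r (last xs) t \<Longrightarrow> t \<notin> set xs \<Longrightarrow> vpath r (xs @ [t])"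
  by (auto simp: vpath_def successively_append_iff)

lemma vpath_mono: "vpath r vs \<Longrightarrow> (\<And>a b. r a b \<Longrightarrow> r' a b) \<Longrightarrow> vpath r' vs"
  unfolding vpath_def by (auto intro: successively_mono)

lemma vpath_rev: "vpath r vs \<Longrightarrow> (\<And>a b. r a b \<Longrightarrow> r b a) \<Longrightarrow> vpath r (rev vs)"
  unfolding vpath_def by (auto intro: successively_mono)

lemma vpath_inner_mono:
  assumes P: "vpath r vs" and S: "\<forall>v\<in>set vs. v \<in> S \<longrightarrow> v = hd vs"
    and T: "\<forall>v\<in>set vs. v \<in> T \<longrightarrow> v = last vs"
    and r': "\<And>a b. r a b \<Longrightarrow> a \<notin> T \<Longrightarrow> b \<notin> S \<Longrightarrow> r' a b"
  shows "vpath r' vs"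
proof -
  have ne: "vs \<noteq> []" and d: "distinct vs" and s: "successively r vs" using P by (auto simp: vpath_def)
  have "r' (vs ! i) (vs ! Suc i)" if i: "Suc i < length vs" for i
  proof (rule r')
    show "r (vs ! i) (vs ! Suc i)" using s i by (rule successively_nth)
    have "vs ! i \<noteq> last vs" using d i ne by (simp add: last_conv_nth nth_eq_iff_index_eq)
    then show "vs ! i \<notin> T" using T i by auto
    have "vs ! Suc i \<noteq> hd vs" using d i ne by (simp add: hd_conv_nth nth_eq_iff_index_eq)
    then show "vs ! Suc i \<notin> S" using S i by auto
  qed
  then show ?thesis using ne d by (simp add: vpath_def successively_conv_nth)
qed

lemma rtrancl_imp_vpath:
  assumes "(s, t) \<in> R\<^sup>*"
  obtains vs where "vpath (\<lambda>a b. (a, b) \<in> R) vs" "hd vs = s" "last vs = t"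
    "set vs \<subseteq> insert s (Range R)"
proof -
  have "(\<lambda>a b. (a, b) \<in> R)\<^sup>*\<^sup>* s t" using assms by (simp add: rtranclp_rtrancl_eq)
  then obtain xs where "rtrancl_path (\<lambda>a b. (a, b) \<in> R) s xs t"
    by (auto simp: rtranclp_eq_rtrancl_path)
  then obtain ys where ys: "rtrancl_path (\<lambda>a b. (a, b) \<in> R) s ys t" "distinct (s # ys)"
    by (meson rtrancl_path_distinct)
  have "successively (\<lambda>a b. (a, b) \<in> R) (s # ys) \<and> last (s # ys) = t \<and> set ys \<subseteq> Range R"
    using ys(1) by induction (auto simp: successively_Cons split: list.splits)
  then show ?thesis using ys(2) by (intro that[of "s # ys"]) (auto simp: vpath_def)
qed

lemma vpath_splice:
  assumes P: "vpath r P" "x \<in> set P" and R: "vpath r (x # R)" "set R \<inter> set P = {}"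
  obtains Q where "vpath r Q" "hd Q = hd P" "last Q = last (x # R)"
    "set Q \<subseteq> (set P - {last P}) \<union> set (x # R)"
proof -
  obtain a1 a2 where P12: "P = a1 @ x # a2" using P(2) by (meson split_list)
  have d: "distinct P" using P(1) by (simp add: vpath_def)
  have "vpath r (a1 @ [x])" using P(1) P12 vpath_prefix[of r "a1 @ [x]" a2] by simp
  moreover have "set a1 \<inter> set (x # R) = {}" using R(2) d P12 by auto
  ultimately have Q: "vpath r (a1 @ x # R)" using R(1) by (blast intro: vpath_append)
  have "last P \<in> set (x # a2)" using P12 by (metis last_appendR last_in_set list.distinct(1))
  then have "last P \<notin> set a1" using d P12 by auto
  then show ?thesis using P12 by (intro that[OF Q]) (auto simp: hd_append)
qed

lemma vpath_shorten:
  assumes "vpath_between r S T vs"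
  obtains ws where "vpath_between r S T ws" "set ws \<subseteq> set vs"
    "\<forall>v\<in>set ws. v \<in> S \<longrightarrow> v = hd ws" "\<forall>v\<in>set ws. v \<in> T \<longrightarrow> v = last ws"
proof -
  have P: "vpath r vs" "hd vs \<in> S" "last vs \<in> T" using assms by (auto simp: vpath_between_def)
  have "\<exists>z\<in>set vs. z \<in> T" using P by (metis last_in_set vpath_def)
  then obtain a t b where vs: "vs = a @ t # b" and t: "t \<in> T" and a: "\<forall>y\<in>set a. y \<notin> T"
    using split_list_first_prop[of vs "\<lambda>z. z \<in> T"] by blast
  have pv: "vpath r (a @ [t])" using vpath_prefix[of r "a @ [t]" b] P(1) vs by simp
  have "hd (a @ [t]) \<in> S" using P(2) vs by (cases a) auto
  then have "\<exists>z\<in>set (a @ [t]). z \<in> S" using pv by (metis hd_in_set vpath_def)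
  then obtain c s d where p: "a @ [t] = c @ s # d" and s: "s \<in> S" and d: "\<forall>y\<in>set d. y \<notin> S"
    using split_list_last_prop[of "a @ [t]" "\<lambda>z. z \<in> S"] by blast
  have "vpath r (s # d)" using vpath_suffix[of r c "s # d"] pv p by simp
  moreover have "last (s # d) = t" using p by (metis last_appendR last_snoc list.distinct(1))
  moreover have "set (s # d) \<subseteq> set (a @ [t])" using p by auto
  ultimately show ?thesis using s t d a vs
    by (intro that[of "s # d"]) (auto simp: vpath_between_def)
qed

text \<open>If A prolonged by t runs into B at its end t, a path R avoiding t is spliced onto the last
  of A and B that it meets.\<close>
lemma two_disjoint_vpaths_reroute:
  assumes A: "vpath r A" "hd A \<in> S" and At: "vpath_between r S T (A @ [t])"
    and B: "vpath_between r S T B" "last B = t" and AB: "set A \<inter> set B = {}"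
    and R: "vpath_between r S T R" "t \<notin> set R"
  shows "\<exists>A B. vpath_between r S T A \<and> vpath_between r S T B \<and> set A \<inter> set B = {}"
proof (cases "set R \<inter> (set A \<union> set B) = {}")
  case True
  then show ?thesis using R B by (intro exI[of _ R] exI[of _ B]) auto
next
  case False
  then obtain r1 x r2 where R12: "R = r1 @ x # r2" and x: "x \<in> set A \<union> set B"
    and r2: "\<forall>z\<in>set r2. z \<notin> set A \<union> set B"
    using split_list_last_prop[of R "\<lambda>z. z \<in> set A \<union> set B"] by blast
  have xr2: "vpath r (x # r2)" "last (x # r2) \<in> T" "t \<notin> set (x # r2)"
    using R R12 vpath_suffix[of r r1 "x # r2"] by (auto simp: vpath_between_def)
  show ?thesis
  proof (cases "x \<in> set A")
    case True
    obtain Q where "vpath r Q" "hd Q = hd A" "last Q = last (x # r2)"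
      "set Q \<subseteq> (set A - {last A}) \<union> set (x # r2)"
      using vpath_splice[OF A(1) True xr2(1)] r2 by blast
    then show ?thesis using A(2) xr2(2) B AB r2 True
      by (intro exI[of _ Q] exI[of _ B]) (auto simp: vpath_between_def)
  next
    case False
    then have "x \<in> set B" using x by simp
    then obtain Q where "vpath r Q" "hd Q = hd B" "last Q = last (x # r2)"
      "set Q \<subseteq> (set B - {t}) \<union> set (x # r2)"
      using vpath_splice[OF _ _ xr2(1)] r2 B by (auto simp: vpath_between_def)
    then show ?thesis using At B xr2 AB r2 False
      by (intro exI[of _ "A @ [t]"] exI[of _ Q]) (auto simp: vpath_between_def)
  qed
qed

lemma two_disjoint_vpaths_step:
  assumes A: "vpath r A" "hd A \<in> S" and B: "vpath_between r S T B" and AB: "set A \<inter> set B = {}"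
    and t: "t \<in> T" "r (last A) t"
    and H: "\<And>z. \<exists>P. vpath_between r S T P \<and> z \<notin> set P"
  shows "\<exists>A B. vpath_between r S T A \<and> vpath_between r S T B \<and> set A \<inter> set B = {}"
proof (cases "t \<in> set A")
  case True
  obtain A' where "vpath r A'" "hd A' = hd A" "last A' = t" "set A' \<subseteq> set A"
    by (rule vpath_splice[OF A(1) True, of "[]"]) (use True in auto)
  then show ?thesis using A(2) B AB t(1) by (intro exI[of _ A'] exI[of _ B]) (auto simp: vpath_between_def)
next
  case tA: False
  have At: "vpath_between r S T (A @ [t])"
    using vpath_snoc[OF A(1) t(2) tA] A t(1) by (simp add: vpath_between_def vpath_def)
  show ?thesis
  proof (cases "t \<in> set B")
    case False
    then show ?thesis using At B AB by (intro exI[of _ "A @ [t]"] exI[of _ B]) auto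
  next
    case True
    obtain B' where B': "vpath r B'" "hd B' = hd B" "last B' = t" "set B' \<subseteq> set B"
      by (rule vpath_splice[of r B t "[]"]) (use B True in \<open>auto simp: vpath_between_def\<close>)
    then have "vpath_between r S T B'" using B t(1) by (simp add: vpath_between_def)
    moreover have "set A \<inter> set B' = {}" using AB B'(4) by blast
    moreover obtain R where "vpath_between r S T R" "t \<notin> set R" using H by blast
    ultimately show ?thesis using two_disjoint_vpaths_reroute[OF A At _ B'(3)] by blast
  qed
qed

text \<open>Menger's theorem for two paths. Induction on the number of vertices outside T: the
  predecessor w of the first vertex of T on some S-T path is added to T, and a path ending at w
  is then prolonged or rerouted as in two_disjoint_vpaths_step.\<close>
lemma two_disjoint_vpaths:
  assumes V: "finite V" "\<And>a b. r a b \<Longrightarrow> a \<in> V \<and> b \<in> V"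
    and H: "\<And>z. \<exists>P. vpath_between r S T P \<and> z \<notin> set P"
  shows "\<exists>A B. vpath_between r S T A \<and> vpath_between r S T B \<and> set A \<inter> set B = {}"
  using H
proof (induction "card (V - T)" arbitrary: T rule: less_induct)
  case less
  show ?case
  proof (cases "S \<inter> T = {}")
    case False
    then obtain s where s: "s \<in> S" "s \<in> T" by blast
    obtain R where "vpath_between r S T R" "s \<notin> set R" using less.prems by blast
    then show ?thesis using s by (intro exI[of _ "[s]"] exI[of _ R]) (auto simp: vpath_between_def)
  next
    case ST: True
    obtain P where P: "vpath_between r S T P" using less.prems by blast
    then have "\<exists>z\<in>set P. z \<in> T" by (metis last_in_set vpath_def vpath_between_def)
    then obtain ys t zs where P12: "P = ys @ t # zs" and t: "t \<in> T" and ys: "\<forall>y\<in>set ys. y \<notin> T"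
      using split_list_first_prop[of P "\<lambda>z. z \<in> T"] by blast
    have ysne: "ys \<noteq> []" using P ST t P12 by (auto simp: vpath_between_def)
    define w where "w = last ys"
    have "vpath r (ys @ [t])" using P P12 vpath_prefix[of r "ys @ [t]" zs] by (simp add: vpath_between_def)
    then have rwt: "r w t" using ysne by (simp add: vpath_def w_def successively_append_iff)
    have wT: "w \<notin> T" using ys ysne w_def by auto
    have "card (V - insert w T) < card (V - T)"
      using V rwt wT by (metis Diff_insert card_Diff1_less finite_Diff DiffI)
    moreover have "\<And>z. \<exists>P. vpath_between r S (insert w T) P \<and> z \<notin> set P"
      using less.prems by (fastforce simp: vpath_between_def)
    ultimately obtain A B where A: "vpath_between r S (insert w T) A"
      and B: "vpath_between r S (insert w T) B" and AB: "set A \<inter> set B = {}"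
      using less.hyps by blast
    have lAB: "last A \<noteq> last B"
      using A B AB by (metis disjoint_iff last_in_set vpath_def vpath_between_def)
    consider "last A = w" | "last B = w" | "last A \<in> T" "last B \<in> T"
      using A B by (auto simp: vpath_between_def)
    then show ?thesis
    proof cases
      case 1
      then have "vpath_between r S T B" using B lAB by (auto simp: vpath_between_def)
      then show ?thesis
        using two_disjoint_vpaths_step[of r A S T B t] A AB t rwt 1 less.prems
        by (auto simp: vpath_between_def)
    next
      case 2
      then have "vpath_between r S T A" using A lAB by (auto simp: vpath_between_def)
      then show ?thesis
        using two_disjoint_vpaths_step[of r B S T A t] B AB t rwt 2 less.prems
        by (auto simp: vpath_between_def Int_commute)
    next
      case 3
      then show ?thesis using A B AB by (auto simp: vpath_between_def)
    qed
  qed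
qed

section \<open>Paths with edges\<close>

lemma is_path_len: "is_path D ends vs es \<Longrightarrow> length vs = Suc (length es)"
  by (simp add: is_path_def)

lemma is_path_edge:
  "is_path D ends vs es \<Longrightarrow> i < length es \<Longrightarrow> es ! i \<in> D \<and> ends (es ! i) = {vs ! i, vs ! Suc i}"
  by (simp add: is_path_def)

lemma is_path_Nil[simp]: "is_path D ends vs [] \<longleftrightarrow> (\<exists>v. vs = [v])"
  by (auto simp: is_path_def length_Suc_conv)

lemma is_path_single[simp]: "is_path D ends [v] es \<longleftrightarrow> es = []"
  by (auto simp: is_path_def)

lemma is_path_Cons_Cons:
  "is_path D ends (v # w # vs) (g # es) \<longleftrightarrow>
     g \<in> D \<and> ends g = {v, w} \<and> v \<notin> set (w # vs) \<and> is_path D ends (w # vs) es"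
  unfolding is_path_def by (auto simp: All_less_Suc2)

lemma is_path_ConsD: "is_path D ends vs (g # es) \<Longrightarrow> \<exists>v w r. vs = v # w # r"
  by (auto simp: is_path_def length_Suc_conv)

lemma is_path_set: "is_path D ends vs es \<Longrightarrow> set es \<subseteq> D"
  by (auto simp: is_path_def in_set_conv_nth)

lemma is_path_mono: "is_path D ends vs es \<Longrightarrow> set es \<subseteq> D' \<Longrightarrow> is_path D' ends vs es"
  by (auto simp: is_path_def)

lemma is_path_distinct: "is_path D ends vs es \<Longrightarrow> distinct vs"
  by (simp add: is_path_def)

lemma is_path_ne: "is_path D ends vs es \<Longrightarrow> vs \<noteq> []"
  by (auto simp: is_path_def)

lemma is_path_single_edge: "is_path D ends [v, w] [g] \<longleftrightarrow> g \<in> D \<and> ends g = {v, w} \<and> v \<noteq> w"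
  by (simp add: is_path_Cons_Cons)

lemma is_path_append:
  assumes "is_path D ends vs1 es1" "is_path D ends vs2 es2" "last vs1 = hd vs2"
    "set vs1 \<inter> set vs2 \<subseteq> {hd vs2}"
  shows "is_path D ends (vs1 @ tl vs2) (es1 @ es2)"
  using assms
proof (induction es1 arbitrary: vs1)
  case Nil
  then obtain v where "vs1 = [v]" by auto
  then show ?case using Nil is_path_ne[OF Nil(2)] by (cases vs2) auto
next
  case (Cons g es1')
  obtain v w r where v: "vs1 = v # w # r" using is_path_ConsD[OF Cons(2)] by blast
  have p1: "is_path D ends (w # r) es1'" and g: "g \<in> D" "ends g = {v, w}" and vn: "v \<notin> set (w # r)"
    using Cons(2) v by (auto simp: is_path_Cons_Cons)
  have l: "last (w # r) = hd vs2" using Cons(4) v by simp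
  have i: "set (w # r) \<inter> set vs2 \<subseteq> {hd vs2}" using Cons(5) v by auto
  have IH: "is_path D ends ((w # r) @ tl vs2) (es1' @ es2)"
    using Cons.IH[OF p1 Cons(3) l i] .
  have dv2: "distinct vs2" using Cons(3) is_path_distinct by blast
  have ne2: "vs2 \<noteq> []" using Cons(3) is_path_ne by blast
  have "v \<notin> set (tl vs2)"
  proof
    assume vt: "v \<in> set (tl vs2)"
    then have "v \<in> set vs2" by (meson list.set_sel(2) ne2)
    then have "v = hd vs2" using Cons(5) v by auto
    then show False using vt dv2 ne2 by (cases vs2) auto
  qed
  then show ?case using IH g vn v by (simp add: is_path_Cons_Cons)
qed

lemma is_path_rev: "is_path D ends vs es \<Longrightarrow> is_path D ends (rev vs) (rev es)"
  by (auto simp: is_path_def rev_nth insert_commute Suc_diff_Suc)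

lemma is_path_take:
  "is_path D ends vs es \<Longrightarrow> k \<le> length es \<Longrightarrow> is_path D ends (take (Suc k) vs) (take k es)"
  by (auto simp: is_path_def)

lemma is_path_drop:
  "is_path D ends vs es \<Longrightarrow> k \<le> length es \<Longrightarrow> is_path D ends (drop k vs) (drop k es)"
  by (auto simp: is_path_def)

lemma is_path_hd: "is_path D ends vs es \<Longrightarrow> hd vs = vs ! 0"
  by (metis hd_conv_nth is_path_ne)

lemma is_path_last: "is_path D ends vs es \<Longrightarrow> last vs = vs ! length es"
  by (metis is_path_len is_path_ne last_conv_nth diff_Suc_1)

lemma is_path_distinct_es: "is_path D ends vs es \<Longrightarrow> distinct es"
proof (induction es arbitrary: vs)
  case Nil then show ?case by simp
next
  case (Cons g es')
  obtain v w r where v: "vs = v # w # r" using is_path_ConsD[OF Cons(2)] by blast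
  have p1: "is_path D ends (w # r) es'" and g: "ends g = {v, w}" and vn: "v \<notin> set (w # r)"
    using Cons(2) v by (auto simp: is_path_Cons_Cons)
  have "g \<notin> set es'"
  proof
    assume "g \<in> set es'"
    then obtain i where i: "i < length es'" "es' ! i = g" by (meson in_set_conv_nth)
    then have "ends g = {(w#r) ! i, (w#r) ! Suc i}" using p1 is_path_edge by metis
    moreover have "(w#r) ! i \<in> set (w # r)" using i is_path_len[OF p1] by (intro nth_mem) simp
    moreover have "(w#r) ! Suc i \<in> set (w # r)" using i is_path_len[OF p1] by (intro nth_mem) simp
    moreover have "v \<in> ends g" using g by simp
    ultimately have "v \<in> set (w # r)" by (metis insert_iff singletonD)
    then show False using vn by simp
  qed
  then show ?case using Cons.IH[OF p1] by simp
qed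

lemma is_path_verts: "is_path D ends vs es \<Longrightarrow> es \<noteq> [] \<Longrightarrow> verts_of ends (set es) = set vs"
proof (induction es arbitrary: vs)
  case Nil then show ?case by simp
next
  case (Cons g es')
  obtain v w r where v: "vs = v # w # r" using is_path_ConsD[OF Cons(2)] by blast
  have p1: "is_path D ends (w # r) es'" and g: "ends g = {v, w}"
    using Cons(2) v by (auto simp: is_path_Cons_Cons)
  show ?case
  proof (cases "es' = []")
    case True
    then have "r = []" using p1 by auto
    then show ?thesis using True g v by (simp add: verts_of_def)
  next
    case False
    then have "verts_of ends (set es') = set (w # r)" using Cons.IH[OF p1] by simp
    then show ?thesis using g v by (auto simp: verts_of_def)
  qed
qed

lemma deg_empty [simp]: "deg ends {} v = 0"
  by (simp add: deg_def)

lemma deg_insert: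
  assumes "finite S" "g \<notin> S"
  shows "deg ends (insert g S) v = deg ends S v + (if v \<in> ends g then 1 else 0)"
proof -
  have "{e \<in> insert g S. v \<in> ends e} =
    (if v \<in> ends g then insert g {e \<in> S. v \<in> ends e} else {e \<in> S. v \<in> ends e})"
    by auto
  then show ?thesis using assms by (simp add: deg_def)
qed

lemma is_path_deg:
  "is_path D ends vs es \<Longrightarrow> es \<noteq> [] \<Longrightarrow>
   deg ends (set es) v = (if v \<in> set vs then (if v = hd vs \<or> v = last vs then 1 else 2) else 0)"
proof (induction es arbitrary: vs)
  case Nil then show ?case by simp
next
  case (Cons g es')
  obtain u w r where v: "vs = u # w # r" using is_path_ConsD[OF Cons(2)] by blast
  have p1: "is_path D ends (w # r) es'" and g: "ends g = {u, w}" and un: "u \<notin> set (w # r)"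
    using Cons(2) v by (auto simp: is_path_Cons_Cons)
  have gn: "g \<notin> set es'" using is_path_distinct_es[OF Cons(2)] by simp
  have d: "deg ends (set (g # es')) v = deg ends (set es') v + (if v \<in> ends g then 1 else 0)"
    using deg_insert[of "set es'" g ends v] gn by simp
  show ?case
  proof (cases "es' = []")
    case True
    then have "r = []" using p1 by auto
    then show ?thesis using True g v d un by auto
  next
    case False
    have IH: "deg ends (set es') v = (if v \<in> set (w # r) then (if v = w \<or> v = last (w # r) then 1 else 2) else 0)"
      using Cons.IH[OF p1 False] by simp
    have dw: "distinct (w # r)" using p1 is_path_distinct by blast
    have rne: "r \<noteq> []" using False is_path_len[OF p1] by auto
    have lw: "last (w # r) \<noteq> w" using dw rne by (cases r rule: rev_cases) auto
    have lv: "last vs = last (w # r)" using v by simp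
    show ?thesis using IH d g v un lw lv by auto
  qed
qed

lemma is_path_verts_subset: "is_path D ends vs es \<Longrightarrow> es \<noteq> [] \<Longrightarrow> set vs \<subseteq> verts_of ends D"
  by (auto simp: is_path_verts[symmetric] verts_of_def dest: is_path_set)

lemma set_tl_subset: "set (tl xs) \<subseteq> set xs"
  by (cases xs) auto

lemma last_append_tl: "ys \<noteq> [] \<Longrightarrow> xs \<noteq> [] \<Longrightarrow> last xs = hd ys \<Longrightarrow> last (xs @ tl ys) = last ys"
  by (cases ys) auto

section \<open>Circles\<close>

definition touching :: "('e \<Rightarrow> 'v set) \<Rightarrow> 'e set \<Rightarrow> ('e \<times> 'e) set" where
  "touching ends S = {(a, b). a \<in> S \<and> b \<in> S \<and> ends a \<inter> ends b \<noteq> {}}"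

lemma edge_connected_touching:
  "edge_connected ends S \<longleftrightarrow> (\<forall>a\<in>S. \<forall>b\<in>S. (a, b) \<in> (touching ends S)\<^sup>*)"
  by (simp add: edge_connected_def touching_def)

lemma edge_connected_singleton: "edge_connected ends {g}"
  by (simp add: edge_connected_touching)

lemma edge_connected_Un:
  assumes A: "edge_connected ends A" and B: "edge_connected ends B"
    and a: "a \<in> A" and b: "b \<in> B" and ab: "ends a \<inter> ends b \<noteq> {}"
  shows "edge_connected ends (A \<union> B)"
proof -
  let ?R = "(touching ends (A \<union> B))\<^sup>*"
  have "sym (touching ends (A \<union> B))" by (auto simp: touching_def sym_def)
  then have R_sym: "(y, x) \<in> ?R" if "(x, y) \<in> ?R" for x y using that by (meson sym_rtrancl symD)
  have sub: "(touching ends A)\<^sup>* \<subseteq> ?R" "(touching ends B)\<^sup>* \<subseteq> ?R"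
    by (intro rtrancl_mono; auto simp: touching_def)+
  have inA: "(x, a) \<in> ?R" if "x \<in> A" for x
    using A a that sub(1) unfolding edge_connected_touching by blast
  have inB: "(x, b) \<in> ?R" if "x \<in> B" for x
    using B b that sub(2) unfolding edge_connected_touching by blast
  have "(b, a) \<in> touching ends (A \<union> B)" using a b ab by (simp add: touching_def Int_commute)
  then have "(x, a) \<in> ?R" if "x \<in> A \<union> B" for x
    using that inA inB by (meson UnE r_into_rtrancl rtrancl_trans)
  then show ?thesis unfolding edge_connected_touching using R_sym rtrancl_trans by meson
qed

lemma is_path_edge_connected: "is_path D ends vs es \<Longrightarrow> edge_connected ends (set es)"
proof (induction es arbitrary: vs)
  case Nil then show ?case by (simp add: edge_connected_touching)
next
  case (Cons g es')
  obtain v w r where v: "vs = v # w # r" using is_path_ConsD[OF Cons(2)] by blast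
  have p1: "is_path D ends (w # r) es'" and g: "ends g = {v, w}"
    using Cons(2) v by (auto simp: is_path_Cons_Cons)
  show ?case
  proof (cases "es' = []")
    case True then show ?thesis by (simp add: edge_connected_singleton)
  next
    case False
    then have "w \<in> ends (es' ! 0)" using is_path_edge[OF p1, of 0] by simp
    then have "edge_connected ends ({g} \<union> set es')"
      using edge_connected_Un[OF edge_connected_singleton Cons.IH[OF p1], where a = g and b = "es' ! 0"] g False
      by auto
    then show ?thesis by simp
  qed
qed

lemma deg_Un_disjoint:
  assumes "A \<inter> B = {}" "finite A" "finite B"
  shows "deg ends (A \<union> B) v = deg ends A v + deg ends B v"
proof -
  have "{e \<in> A \<union> B. v \<in> ends e} = {e \<in> A. v \<in> ends e} \<union> {e \<in> B. v \<in> ends e}" by auto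
  then show ?thesis using assms by (simp add: deg_def card_Un_disjoint disjoint_iff)
qed

lemma verts_of_Un: "verts_of ends (A \<union> B) = verts_of ends A \<union> verts_of ends B"
  by (auto simp: verts_of_def)

lemma is_path_hd_in_first_edge: "is_path D ends vs es \<Longrightarrow> es \<noteq> [] \<Longrightarrow> hd vs \<in> ends (es ! 0)"
  using is_path_edge[of D ends vs es 0] is_path_hd[of D ends vs es] by auto

lemma is_circle_Un_paths:
  assumes P: "is_path E ends vs1 es1" and Q: "is_path E ends vs2 es2"
    and h: "hd vs1 = hd vs2" and l: "last vs1 = last vs2" and xy: "hd vs1 \<noteq> last vs1"
    and vi: "set vs1 \<inter> set vs2 \<subseteq> {hd vs1, last vs1}" and ei: "set es1 \<inter> set es2 = {}"
  shows "is_circle E ends (set es1 \<union> set es2)"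
proof -
  have ne1: "es1 \<noteq> []" using P xy by auto
  have ne2: "es2 \<noteq> []" using Q xy h l by auto
  have "deg ends (set es1 \<union> set es2) v = 2" if "v \<in> verts_of ends (set es1 \<union> set es2)" for v
  proof -
    have "v \<in> set vs1 \<union> set vs2"
      using that is_path_verts[OF P ne1] is_path_verts[OF Q ne2] by (simp add: verts_of_Un)
    moreover have "hd vs1 \<in> set vs1" "last vs1 \<in> set vs1" "hd vs2 \<in> set vs2" "last vs2 \<in> set vs2"
      using is_path_ne[OF P] is_path_ne[OF Q] by auto
    ultimately show ?thesis
      using vi h l xy ei unfolding deg_Un_disjoint[OF ei finite_set finite_set]
        is_path_deg[OF P ne1] is_path_deg[OF Q ne2] by auto
  qed
  moreover have "edge_connected ends (set es1 \<union> set es2)"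
  proof (rule edge_connected_Un[OF is_path_edge_connected[OF P] is_path_edge_connected[OF Q]])
    show "es1 ! 0 \<in> set es1" "es2 ! 0 \<in> set es2" using ne1 ne2 by simp_all
    show "ends (es1 ! 0) \<inter> ends (es2 ! 0) \<noteq> {}"
      using is_path_hd_in_first_edge[OF P ne1] is_path_hd_in_first_edge[OF Q ne2] h by auto
  qed
  ultimately show ?thesis unfolding is_circle_def
    using is_path_set[OF P] is_path_set[OF Q] ne1 by auto
qed

lemma is_circle_mono: "is_circle D ends S \<Longrightarrow> S \<subseteq> E \<Longrightarrow> is_circle E ends S"
  by (simp add: is_circle_def)

lemma is_circle_deg:
  "is_circle E ends Z \<Longrightarrow> deg ends Z v = (if v \<in> verts_of ends Z then 2 else 0)"
  by (cases "v \<in> verts_of ends Z") (auto simp: is_circle_def deg_def verts_of_def)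

lemma is_circle_other_edge:
  assumes c: "is_circle E ends Z" and g: "g \<in> Z" "v \<in> ends g"
  obtains h where "h \<in> Z" "v \<in> ends h" "h \<noteq> g"
proof -
  have "v \<in> verts_of ends Z" using g by (auto simp: verts_of_def)
  then have two: "card {h \<in> Z. v \<in> ends h} = 2" using is_circle_deg[OF c, of v] by (simp add: deg_def)
  have "\<not> {h \<in> Z. v \<in> ends h} \<subseteq> {g}"
  proof
    assume "{h \<in> Z. v \<in> ends h} \<subseteq> {g}"
    then have "card {h \<in> Z. v \<in> ends h} \<le> card {g}" by (intro card_mono) auto
    then show False using two by simp
  qed
  then show ?thesis using that by blast
qed

lemma is_circle_subset_eq:
  assumes c1: "is_circle E ends Z1" and c2: "is_circle E ends Z2" and s: "Z1 \<subseteq> Z2"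
  shows "Z1 = Z2"
proof -
  obtain a0 where a0: "a0 \<in> Z1" using c1 by (auto simp: is_circle_def)
  have "b \<in> Z1" if b: "b \<in> Z2" for b
  proof -
    have "(a0, b) \<in> (touching ends Z2)\<^sup>*"
      using c2 a0 s b by (auto simp: is_circle_def edge_connected_touching)
    then show "b \<in> Z1"
    proof (induction rule: rtrancl_induct)
      case base then show ?case using a0 .
    next
      case (step y z)
      then obtain v where v: "v \<in> ends y" "v \<in> ends z" and z: "z \<in> Z2" by (auto simp: touching_def)
      have "v \<in> verts_of ends Z1" "v \<in> verts_of ends Z2" using step(3) v s by (auto simp: verts_of_def)
      then have "card {e \<in> Z1. v \<in> ends e} = card {e \<in> Z2. v \<in> ends e}"
        using is_circle_deg[OF c1, of v] is_circle_deg[OF c2, of v] by (simp add: deg_def)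
      moreover have "finite Z2" using c2 by (simp add: is_circle_def)
      ultimately have "{e \<in> Z1. v \<in> ends e} = {e \<in> Z2. v \<in> ends e}"
        using s by (intro card_subset_eq) auto
      then show ?case using z v by blast
    qed
  qed
  then show ?thesis using s by blast
qed

definition even_degrees :: "('e \<Rightarrow> 'v set) \<Rightarrow> 'e set \<Rightarrow> bool" where
  "even_degrees ends F \<longleftrightarrow> (\<forall>v. even (deg ends F v))"

lemma is_circle_even_degrees: "is_circle E ends Z \<Longrightarrow> even_degrees ends Z"
  by (simp add: even_degrees_def is_circle_deg)

lemma card_sym_diff:
  assumes "finite X" "finite Y"
  shows "card (sym_diff X Y) + 2 * card (X \<inter> Y) = card X + card Y"
proof -
  have "card (sym_diff X Y) = card (X - Y) + card (Y - X)"
    using assms by (intro card_Un_disjoint) auto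
  then show ?thesis using assms card_Int_Diff[of X Y] card_Int_Diff[of Y X] by (simp add: Int_commute)
qed

lemma even_degrees_sym_diff:
  assumes "finite A" "finite B" "even_degrees ends A" "even_degrees ends B"
  shows "even_degrees ends (sym_diff A B)"
  unfolding even_degrees_def
proof
  fix v
  let ?X = "{e \<in> A. v \<in> ends e}" and ?Y = "{e \<in> B. v \<in> ends e}"
  have sd: "{e \<in> sym_diff A B. v \<in> ends e} = sym_diff ?X ?Y" by blast
  have "finite ?X" "finite ?Y" using assms(1,2) by auto
  then have "deg ends (sym_diff A B) v + 2 * card (?X \<inter> ?Y) = deg ends A v + deg ends B v"
    unfolding deg_def sd by (rule card_sym_diff)
  moreover have "even (deg ends A v + deg ends B v)" using assms(3,4) by (simp add: even_degrees_def)
  ultimately have "even (deg ends (sym_diff A B) v + 2 * card (?X \<inter> ?Y))" by (simp only:)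
  then show "even (deg ends (sym_diff A B) v)" by simp
qed

lemma even_degrees_subset_circle:
  assumes c: "is_circle E ends C" and F: "F \<subseteq> C" "even_degrees ends F" and e: "e \<in> C" "e \<notin> F"
  shows "F = {}"
proof (rule ccontr)
  assume "F \<noteq> {}"
  then obtain a where a: "a \<in> F" by blast
  have "(a, e) \<in> (touching ends C)\<^sup>*"
    using c a F(1) e by (auto simp: is_circle_def edge_connected_touching)
  then have "e \<in> F"
  proof (induction rule: rtrancl_induct)
    case base then show ?case using a .
  next
    case (step y z)
    then obtain v where v: "v \<in> ends y" "v \<in> ends z" and yz: "y \<in> C" "z \<in> C"
      by (auto simp: touching_def)
    show ?case
    proof (rule ccontr)
      assume zF: "z \<notin> F"
      have "v \<in> verts_of ends C" using yz v by (auto simp: verts_of_def)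
      then have "card {g \<in> C. v \<in> ends g} = 2" using is_circle_deg[OF c, of v] by (simp add: deg_def)
      moreover have "{y, z} \<subseteq> {g \<in> C. v \<in> ends g}" "y \<noteq> z" "finite C"
        using v yz zF step(3) c by (auto simp: is_circle_def)
      ultimately have "{y, z} = {g \<in> C. v \<in> ends g}" by (intro card_subset_eq) auto
      then have "{g \<in> F. v \<in> ends g} = {y}" using F(1) step(3) zF by blast
      then have "deg ends F v = 1" by (simp add: deg_def)
      then show False using F(2) unfolding even_degrees_def by (metis odd_one)
    qed
  qed
  then show False using e by blast
qed

lemma circ_sign_sym_diff:
  assumes "finite A" "finite B" "\<forall>g\<in>A \<inter> B. \<sigma> g = 1 \<or> \<sigma> g = -1"
  shows "circ_sign \<sigma> (sym_diff A B) = circ_sign \<sigma> A * circ_sign \<sigma> B"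
proof -
  have "prod \<sigma> (A \<inter> B) * prod \<sigma> (A \<inter> B) = prod (\<lambda>g. \<sigma> g * \<sigma> g) (A \<inter> B)"
    by (simp add: prod.distrib)
  also have "\<dots> = 1"
  proof (intro prod.neutral ballI)
    fix g assume "g \<in> A \<inter> B"
    then have "\<sigma> g = 1 \<or> \<sigma> g = -1" using assms(3) by blast
    then show "\<sigma> g * \<sigma> g = 1" by auto
  qed
  finally have sq: "prod \<sigma> (A \<inter> B) * prod \<sigma> (A \<inter> B) = 1" .
  have "prod \<sigma> A = prod \<sigma> (A \<inter> B) * prod \<sigma> (A - B)"
    "prod \<sigma> B = prod \<sigma> (A \<inter> B) * prod \<sigma> (B - A)"
    using assms(1,2) by (metis prod.Int_Diff, metis prod.Int_Diff Int_commute)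
  moreover have "prod \<sigma> (sym_diff A B) = prod \<sigma> (A - B) * prod \<sigma> (B - A)"
    using assms(1,2) by (intro prod.union_disjoint) auto
  ultimately show ?thesis unfolding circ_sign_def using sq by (simp add: algebra_simps)
qed

lemma circ_sign_cases:
  "finite A \<Longrightarrow> \<forall>g\<in>A. \<sigma> g = 1 \<or> \<sigma> g = -1 \<Longrightarrow> circ_sign \<sigma> A = 1 \<or> circ_sign \<sigma> A = -1"
  unfolding circ_sign_def by (induction A rule: finite_induct) auto

lemma graph_other_end:
  assumes "graph V E ends" "g \<in> E" "x \<in> ends g"
  obtains w where "w \<noteq> x" "ends g = {x, w}"
proof -
  have "card (ends g) = 2" using assms by (simp add: graph_def)
  then obtain a b where ab: "a \<noteq> b" "ends g = {a, b}" unfolding card_2_iff by blast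
  show ?thesis
  proof (cases "x = a")
    case True
    then show ?thesis using ab that[of b] by simp
  next
    case False
    then have "x = b" using ab assms(3) by blast
    then show ?thesis using ab that[of a] by (auto simp: insert_commute)
  qed
qed

lemma verts_of_subset: "graph V E ends \<Longrightarrow> S \<subseteq> E \<Longrightarrow> verts_of ends S \<subseteq> V"
  unfolding graph_def verts_of_def by blast

lemma finite_verts_of:
  assumes "graph V E ends" "S \<subseteq> E"
  shows "finite (verts_of ends S)"
  using finite_subset[OF verts_of_subset[OF assms]] assms(1) by (simp add: graph_def)

lemma is_path_length_le:
  assumes p: "is_path D ends vs es" and fin: "finite (verts_of ends D)"
  shows "length es \<le> card (verts_of ends D)"
proof (cases "es = []")
  case False
  have "set vs = verts_of ends (set es)" using is_path_verts[OF p False] by simp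
  also have "\<dots> \<subseteq> verts_of ends D" using is_path_set[OF p] by (auto simp: verts_of_def)
  finally have "card (set vs) \<le> card (verts_of ends D)" using fin by (simp add: card_mono)
  then show ?thesis using is_path_distinct[OF p] is_path_len[OF p] by (simp add: distinct_card)
qed simp

lemma is_path_longest_from:
  assumes fin: "finite (verts_of ends D)" and g: "g \<in> D" "ends g = {x, w}" "x \<noteq> w"
  obtains vs es where "is_path D ends vs es" "hd vs = x" "es \<noteq> []"
    "\<And>vs' es'. is_path D ends vs' es' \<Longrightarrow> hd vs' = x \<Longrightarrow> length es' \<le> length es"
proof -
  define Pn where "Pn n \<longleftrightarrow> (\<exists>vs es. is_path D ends vs es \<and> hd vs = x \<and> length es = n)" for n
  have bound: "n \<le> card (verts_of ends D)" if "Pn n" for n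
    using that is_path_length_le[OF _ fin] unfolding Pn_def by blast
  have P1: "Pn 1" unfolding Pn_def using g
    by (intro exI[of _ "[x, w]"] exI[of _ "[g]"]) (simp add: is_path_single_edge)
  define n where "n = (GREATEST n. Pn n)"
  have nmax: "m \<le> n" if "Pn m" for m
    unfolding n_def using that bound by (rule Greatest_le_nat)
  have "Pn n" unfolding n_def using P1 bound by (rule GreatestI_nat)
  then obtain vs es where p: "is_path D ends vs es" "hd vs = x" "length es = n"
    unfolding Pn_def by blast
  show ?thesis
  proof (rule that[OF p(1,2)])
    show "es \<noteq> []" using p(3) nmax[OF P1] by auto
    fix vs' es' assume "is_path D ends vs' es'" "hd vs' = x"
    then show "length es' \<le> length es" using nmax p(3) unfolding Pn_def by blast
  qed
qed

lemma is_path_edge_at_last: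
  assumes p: "is_path D ends vs es" and j: "j < length es" "last vs \<in> ends (es ! j)"
  shows "Suc j = length es"
proof -
  have "vs ! length es = vs ! j \<or> vs ! length es = vs ! Suc j"
    using is_path_edge[OF p j(1)] is_path_last[OF p] j(2) by auto
  then show ?thesis
    using is_path_distinct[OF p] is_path_len[OF p] j(1) by (auto simp: nth_eq_iff_index_eq)
qed

lemma is_circle_path_inner_vertex:
  assumes c: "is_circle E ends Z" and p: "is_path Z ends vs es" and j: "0 < j" "j < length es"
    and h: "h \<in> Z" "vs ! j \<in> ends h"
  shows "h \<in> set es"
proof (rule ccontr)
  assume hn: "h \<notin> set es"
  let ?a = "es ! (j - 1)" and ?b = "es ! j" and ?H = "{g \<in> Z. vs ! j \<in> ends g}"
  have "?a \<in> ?H" "?b \<in> ?H" using is_path_edge[OF p, of "j - 1"] is_path_edge[OF p, of j] j by auto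
  moreover have "?a \<noteq> ?b" using is_path_distinct_es[OF p] j by (simp add: nth_eq_iff_index_eq)
  moreover have "?a \<noteq> h" "?b \<noteq> h" using hn j nth_mem[of "j - 1" es] nth_mem[of j es] by auto
  moreover have "finite Z" using c by (simp add: is_circle_def)
  ultimately have "card {?a, ?b, h} \<le> card ?H" using h by (intro card_mono) auto
  moreover have "vs ! j \<in> verts_of ends Z" using h by (auto simp: verts_of_def)
  then have "card ?H = 2" using is_circle_deg[OF c, of "vs ! j"] by (simp add: deg_def)
  ultimately show False using \<open>?a \<noteq> ?b\<close> \<open>?a \<noteq> h\<close> \<open>?b \<noteq> h\<close> by simp
qed

text \<open>A longest path from x inside a circle Z uses all of Z except one edge, which closes it.\<close>
lemma is_circle_closed_path:
  assumes G: "graph V E ends" and c: "is_circle E ends Z" and x: "x \<in> verts_of ends Z"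
  obtains vs es h where "is_path Z ends vs es" "es \<noteq> []" "hd vs = x" "h \<in> Z" "h \<notin> set es"
    "ends h = {last vs, x}" "Z = insert h (set es)"
proof -
  have ZE: "Z \<subseteq> E" using c by (simp add: is_circle_def)
  obtain g0 where g0: "g0 \<in> Z" "x \<in> ends g0" using x by (auto simp: verts_of_def)
  obtain w0 where w0: "w0 \<noteq> x" "ends g0 = {x, w0}" using graph_other_end[OF G _ g0(2)] g0(1) ZE by blast
  obtain vs es where p: "is_path Z ends vs es" "hd vs = x" "es \<noteq> []"
    and longest: "\<And>vs' es'. is_path Z ends vs' es' \<Longrightarrow> hd vs' = x \<Longrightarrow> length es' \<le> length es"
    using is_path_longest_from[OF finite_verts_of[OF G ZE] g0(1) w0(2)] w0(1) by metis
  define n where "n = length es"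
  define y where "y = last vs"
  have lv: "length vs = Suc n" using is_path_len[OF p(1)] n_def by simp
  have dv: "distinct vs" using is_path_distinct[OF p(1)] .
  have n0: "0 < n" using p(3) n_def by simp
  have yn: "y = vs ! n" using is_path_last[OF p(1)] n_def y_def by simp
  have x0: "x = vs ! 0" using is_path_hd[OF p(1)] p(2) by simp
  have xy: "x \<noteq> y" using x0 yn dv lv n0 by (simp add: nth_eq_iff_index_eq)
  have last_edge: "es ! (n - 1) \<in> Z" "y \<in> ends (es ! (n - 1))"
    using is_path_edge[OF p(1), of "n - 1"] n0 yn n_def by auto
  then obtain h where h: "h \<in> Z" "y \<in> ends h" "h \<noteq> es ! (n - 1)"
    using is_circle_other_edge[OF c] by blast
  have hn: "h \<notin> set es"
  proof
    assume "h \<in> set es"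
    then obtain j where j: "j < n" "es ! j = h" using n_def by (metis in_set_conv_nth)
    then have "Suc j = n" using is_path_edge_at_last[OF p(1)] h(2) y_def n_def by blast
    then show False using h(3) j by auto
  qed
  obtain u where u: "u \<noteq> y" "ends h = {y, u}" using graph_other_end[OF G _ h(2)] h(1) ZE by blast
  have "u \<in> set vs"
  proof (rule ccontr)
    assume un: "u \<notin> set vs"
    have "is_path Z ends [y, u] [h]" using h u by (simp add: is_path_single_edge)
    then have "is_path Z ends (vs @ tl [y, u]) (es @ [h])"
      using un y_def by (intro is_path_append[OF p(1)]) auto
    then have "Suc n \<le> n" using longest[of "vs @ [u]" "es @ [h]"] p(2) is_path_ne[OF p(1)] n_def by simp
    then show False by simp
  qed
  then obtain j where j: "j < Suc n" "vs ! j = u" using lv by (metis in_set_conv_nth)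
  have "j \<noteq> n" using j u yn by auto
  moreover have "\<not> (0 < j \<and> j < n)"
    using is_circle_path_inner_vertex[OF c p(1), of j h] h(1) u(2) j(2) hn n_def by auto
  ultimately have ux: "u = x" using j x0 by (cases j) auto
  have "is_path Z ends [x, y] [h]" using h u ux xy by (simp add: is_path_single_edge insert_commute)
  then have "is_circle Z ends (set es \<union> set [h])"
    by (rule is_circle_Un_paths[OF p(1)]) (use p(2) xy hn in \<open>simp_all add: y_def\<close>)
  moreover have "insert h (set es) \<subseteq> E" using h(1) is_path_set[OF p(1)] ZE by blast
  ultimately have "is_circle E ends (insert h (set es))" by (simp add: is_circle_mono)
  then have "Z = insert h (set es)"
    using is_circle_subset_eq[OF _ c] h(1) is_path_set[OF p(1)] by blast
  moreover have "ends h = {last vs, x}" using u ux y_def by auto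
  ultimately show ?thesis using that[OF p(1) p(3) p(2) h(1) hn] by blast
qed

lemma set_take_Suc_Int_set_drop:
  assumes "distinct xs" "k < length xs"
  shows "set (take (Suc k) xs) \<inter> set (drop k xs) = {xs ! k}"
proof -
  have "take (Suc k) xs = take k xs @ [xs ! k]" "drop k xs = xs ! k # drop (Suc k) xs"
    using assms(2) by (simp_all add: take_Suc_conv_app_nth Cons_nth_drop_Suc)
  moreover have "set (take k xs) \<inter> set (drop k xs) = {}"
    using assms(1) by (simp add: set_take_disj_set_drop_if_distinct)
  moreover have "xs ! k \<notin> set (drop (Suc k) xs)"
    using assms calculation(2) by (metis distinct.simps(2) distinct_drop)
  ultimately show ?thesis by auto
qed

text \<open>The second arc is the rest of the closed path followed by the closing edge, reversed.\<close>
lemma is_circle_split: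
  assumes G: "graph V E ends" and c: "is_circle E ends Z" and x: "x \<in> verts_of ends Z"
    and y: "y \<in> verts_of ends Z" and xy: "x \<noteq> y"
  obtains vs1 es1 vs2 es2 where "is_path Z ends vs1 es1" "is_path Z ends vs2 es2"
    "hd vs1 = x" "hd vs2 = x" "last vs1 = y" "last vs2 = y" "set vs1 \<inter> set vs2 = {x, y}"
    "set es1 \<inter> set es2 = {}" "set es1 \<union> set es2 = Z"
proof -
  obtain vs es h where cy: "is_path Z ends vs es" "es \<noteq> []" "hd vs = x" "h \<in> Z" "h \<notin> set es"
    "ends h = {last vs, x}" "Z = insert h (set es)" by (rule is_circle_closed_path[OF G c x])
  define n where "n = length es"
  have lv: "length vs = Suc n" using is_path_len[OF cy(1)] n_def by simp
  have dv: "distinct vs" using is_path_distinct[OF cy(1)] .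
  have x0: "vs ! 0 = x" using is_path_hd[OF cy(1)] cy(3) by simp
  have "verts_of ends Z = ends h \<union> verts_of ends (set es)" using cy(7) by (auto simp: verts_of_def)
  also have "\<dots> = set vs" using is_path_verts[OF cy(1,2)] cy(6) cy(3) is_path_ne[OF cy(1)] by auto
  finally obtain k where k: "k < Suc n" "vs ! k = y" using y lv by (metis in_set_conv_nth)
  have k0: "0 < k" using k x0 xy by (cases k) auto
  have x_drop: "x \<notin> set (drop k vs)"
  proof
    assume "x \<in> set (drop k vs)"
    then obtain i where "i < length vs - k" "vs ! (k + i) = vs ! 0" using x0 by (auto simp: in_set_conv_nth)
    then show False using dv k0 lv nth_eq_iff_index_eq[OF dv, of "k + i" 0] by simp
  qed
  have P1: "is_path Z ends (take (Suc k) vs) (take k es)" using is_path_take[OF cy(1)] k n_def by simp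
  have h1: "hd (take (Suc k) vs) = x" using cy(3) lv by (cases vs) auto
  have x_take: "x \<in> set (take (Suc k) vs)" using cy(3) lv by (cases vs) auto
  have l1: "last (take (Suc k) vs) = y" using k lv by (simp add: take_Suc_conv_app_nth)
  have last_in_drop: "last vs \<in> set (drop k vs)"
    using k lv last_in_set[of "drop k vs"] by simp
  then have "is_path Z ends [last vs, x] [h]"
    using cy(4,6) x_drop by (auto simp: is_path_single_edge)
  then have "is_path Z ends (drop k vs @ tl [last vs, x]) (drop k es @ [h])"
    using is_path_drop[OF cy(1), of k] k n_def x_drop lv by (intro is_path_append) auto
  then have P2: "is_path Z ends (x # rev (drop k vs)) (h # rev (drop k es))"
    using is_path_rev by fastforce
  have l2: "last (x # rev (drop k vs)) = y" using k lv by (simp add: last_rev hd_drop_conv_nth)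
  have "set (take (Suc k) vs) \<inter> set (x # rev (drop k vs)) = {x, y}"
    using set_take_Suc_Int_set_drop[OF dv, of k] k lv h1 x_take by auto
  moreover have "set (take k es) \<inter> set (h # rev (drop k es)) = {}"
    using cy(5) is_path_distinct_es[OF cy(1)]
    by (auto simp: set_take_disj_set_drop_if_distinct dest: in_set_takeD)
  moreover have "set (take k es) \<union> set (h # rev (drop k es)) = Z"
    using cy(7) by (auto simp flip: set_append)
  ultimately show ?thesis using that[OF P1 P2 h1 _ l1 l2] by simp
qed

section \<open>Negative batteries in a block\<close>

definition adjacent :: "('e \<Rightarrow> 'v set) \<Rightarrow> 'e set \<Rightarrow> 'v \<Rightarrow> 'v \<Rightarrow> bool" where
  "adjacent ends D a b \<longleftrightarrow> (\<exists>g\<in>D. ends g = {a, b})"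

lemma adjacent_sym: "adjacent ends D a b \<Longrightarrow> adjacent ends D b a"
  by (auto simp: adjacent_def insert_commute)

lemma vpath_adjacent_is_path:
  assumes "vpath (adjacent ends D) vs"
  obtains es where "is_path D ends vs es"
proof -
  have "\<exists>es. is_path D ends vs es" using assms
  proof (induction vs rule: induct_list012)
    case (3 x y xs)
    then obtain es where "is_path D ends (y # xs) es" by (auto simp: vpath_def)
    moreover obtain g where "g \<in> D" "ends g = {x, y}" using 3(3) by (auto simp: vpath_def adjacent_def)
    ultimately show ?case using 3(3) by (intro exI[of _ "g # es"]) (simp add: is_path_Cons_Cons vpath_def)
  qed (auto simp: vpath_def)
  then show ?thesis using that by blast
qed

lemma adj_avoid_rtrancl_sym:
  assumes "(a, b) \<in> (adj_avoid E ends X)\<^sup>*"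
  shows "(b, a) \<in> (adj_avoid E ends X)\<^sup>*"
proof -
  have "sym (adj_avoid E ends X)" by (auto simp: adj_avoid_def sym_def insert_commute)
  then show ?thesis using assms by (meson sym_rtrancl symD)
qed

locale neg_battery_block =
  fixes V :: "'v set" and E :: "'e set" and ends :: "'e \<Rightarrow> 'v set" and \<sigma> :: "'e \<Rightarrow> int"
    and e :: 'e and C :: "'e set"
  assumes signed: "signed_graph V E ends \<sigma>" and block: "is_block V E ends"
    and battery: "neg_battery_circ E ends \<sigma> e C"
begin

abbreviation VC where "VC \<equiv> verts_of ends C"

lemma graph: "graph V E ends"
  using signed by (simp add: signed_graph_def)

lemma sign_cases: "g \<in> E \<Longrightarrow> \<sigma> g = 1 \<or> \<sigma> g = -1"
  using signed by (simp add: signed_graph_def)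

lemma ends_subset: "g \<in> E \<Longrightarrow> ends g \<subseteq> V"
  using graph by (simp add: graph_def)

lemma C: "is_circle E ends C" "circ_sign \<sigma> C = -1" "e \<in> C"
  using battery by (auto simp: neg_battery_circ_def)

lemma neg_circle_through_e: "is_circle E ends Z \<Longrightarrow> circ_sign \<sigma> Z = -1 \<Longrightarrow> e \<in> Z \<Longrightarrow> Z = C"
  using battery by (auto simp: neg_battery_circ_def)

lemma C_subset: "C \<subseteq> E"
  using C(1) by (simp add: is_circle_def)

lemma ends_subset_VC: "g \<in> C \<Longrightarrow> ends g \<subseteq> VC"
  by (auto simp: verts_of_def)

lemma edge_ends:
  assumes "g \<in> E"
  obtains u v where "ends g = {u, v}" "u \<noteq> v"
proof -
  have "card (ends g) = 2" using graph assms by (simp add: graph_def)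
  then show ?thesis using that unfolding card_2_iff by blast
qed

lemma circle_sign_cases: "is_circle E ends Z \<Longrightarrow> circ_sign \<sigma> Z = 1 \<or> circ_sign \<sigma> Z = -1"
  using sign_cases by (intro circ_sign_cases) (auto simp: is_circle_def)

lemma circ_sign_sym_diff_circles:
  assumes "is_circle E ends Z1" "is_circle E ends Z2"
  shows "circ_sign \<sigma> (sym_diff Z1 Z2) = circ_sign \<sigma> Z1 * circ_sign \<sigma> Z2"
  using assms sign_cases by (intro circ_sign_sym_diff) (auto simp: is_circle_def)

lemma block_path_avoiding:
  assumes S: "S \<subseteq> V" "s \<in> S" "s \<noteq> z" and T: "T \<subseteq> V" "t \<in> T" "t \<noteq> z"
  shows "\<exists>P. vpath_between (adjacent ends E) S T P \<and> z \<notin> set P"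
proof -
  have "(s, t) \<in> (adj_avoid E ends {z})\<^sup>*"
  proof (cases "z \<in> V")
    case True
    then have "\<forall>u\<in>V - {z}. \<forall>w\<in>V - {z}. (u, w) \<in> (adj_avoid E ends {z})\<^sup>*"
      using block by (simp add: is_block_def cutpoint_def)
    then show ?thesis using S T by blast
  next
    case False
    have "(s, t) \<in> (adj_avoid E ends {})\<^sup>*" using block S T by (auto simp: is_block_def connected_graph_def)
    moreover have "adj_avoid E ends {} \<subseteq> adj_avoid E ends {z}"
      using False ends_subset by (fastforce simp: adj_avoid_def)
    ultimately show ?thesis using rtrancl_mono by blast
  qed
  then obtain P where P: "vpath (\<lambda>a b. (a, b) \<in> adj_avoid E ends {z}) P" "hd P = s" "last P = t"
    "set P \<subseteq> insert s (Range (adj_avoid E ends {z}))" by (rule rtrancl_imp_vpath)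
  have "z \<notin> set P" using P(4) S(3) by (auto simp: adj_avoid_def)
  moreover have "vpath (adjacent ends E) P"
    using P(1) by (rule vpath_mono) (auto simp: adj_avoid_def adjacent_def)
  ultimately show ?thesis using P S T by (auto simp: vpath_between_def)
qed

lemma block_two_disjoint_paths:
  assumes S: "S \<subseteq> V" "s1 \<in> S" "s2 \<in> S" "s1 \<noteq> s2" and T: "T \<subseteq> V" "t1 \<in> T" "t2 \<in> T" "t1 \<noteq> t2"
  obtains A B where "vpath_between (adjacent ends E) S T A" "vpath_between (adjacent ends E) S T B"
    "set A \<inter> set B = {}"
    "\<forall>v\<in>set A. v \<in> S \<longrightarrow> v = hd A" "\<forall>v\<in>set A. v \<in> T \<longrightarrow> v = last A"
    "\<forall>v\<in>set B. v \<in> S \<longrightarrow> v = hd B" "\<forall>v\<in>set B. v \<in> T \<longrightarrow> v = last B"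
proof -
  have "\<exists>P. vpath_between (adjacent ends E) S T P \<and> z \<notin> set P" for z
  proof -
    obtain s where "s \<in> S" "s \<noteq> z" using S by blast
    moreover obtain t where "t \<in> T" "t \<noteq> z" using T by blast
    ultimately show ?thesis using block_path_avoiding S(1) T(1) by blast
  qed
  moreover have "finite V" using graph by (simp add: graph_def)
  moreover have "a \<in> V \<and> b \<in> V" if "adjacent ends E a b" for a b
    using that ends_subset by (auto simp: adjacent_def)
  ultimately obtain A0 B0 where AB0: "vpath_between (adjacent ends E) S T A0"
    "vpath_between (adjacent ends E) S T B0" "set A0 \<inter> set B0 = {}"
    using two_disjoint_vpaths[of V "adjacent ends E" S T] by blast
  obtain A where A: "vpath_between (adjacent ends E) S T A" "set A \<subseteq> set A0"
    "\<forall>v\<in>set A. v \<in> S \<longrightarrow> v = hd A" "\<forall>v\<in>set A. v \<in> T \<longrightarrow> v = last A"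
    by (rule vpath_shorten[OF AB0(1)])
  obtain B where B: "vpath_between (adjacent ends E) S T B" "set B \<subseteq> set B0"
    "\<forall>v\<in>set B. v \<in> S \<longrightarrow> v = hd B" "\<forall>v\<in>set B. v \<in> T \<longrightarrow> v = last B"
    by (rule vpath_shorten[OF AB0(2)])
  have "set A \<inter> set B = {}" using AB0(3) A(2) B(2) by blast
  then show ?thesis by (rule that[OF A(1) B(1) _ A(3,4) B(3,4)])
qed

definition ear :: "'v list \<Rightarrow> 'e list \<Rightarrow> bool" where
  "ear vs es \<longleftrightarrow> is_path (E - C) ends vs es \<and> hd vs \<noteq> last vs \<and> hd vs \<in> VC \<and> last vs \<in> VC
     \<and> (\<forall>v\<in>set vs. v \<in> VC \<longrightarrow> v = hd vs \<or> v = last vs)"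

lemma ear_disjoint_C: "ear vs es \<Longrightarrow> set es \<inter> C = {}"
  using is_path_set by (fastforce simp: ear_def)

lemma ear_rev: "ear vs es \<Longrightarrow> ear (rev vs) (rev es)"
  using is_path_rev by (auto simp: ear_def hd_rev last_rev)

lemma ear_Un_C_path_is_circle:
  assumes q: "ear vs es" and c: "is_path C ends ws fs" "hd ws = hd vs" "last ws = last vs"
  shows "is_circle E ends (set es \<union> set fs)"
proof -
  have P: "is_path (E - C) ends vs es" and xy: "hd vs \<noteq> last vs"
    and inner: "\<forall>v\<in>set vs. v \<in> VC \<longrightarrow> v = hd vs \<or> v = last vs" using q by (auto simp: ear_def)
  have fs: "fs \<noteq> []" using c xy by auto
  have "set ws \<subseteq> VC" using is_path_verts_subset[OF c(1) fs] .
  then have "set vs \<inter> set ws \<subseteq> {hd vs, last vs}" using inner by blast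
  moreover have "set es \<inter> set fs = {}" using is_path_set[OF P] is_path_set[OF c(1)] by blast
  moreover have "is_path E ends vs es" "is_path E ends ws fs"
    using is_path_mono[OF P] is_path_mono[OF c(1)] is_path_set[OF P] is_path_set[OF c(1)] C_subset
    by auto
  ultimately show ?thesis using is_circle_Un_paths c(2,3) xy by metis
qed

text \<open>The two circles formed by an ear and the two arcs of C into which it cuts C have sign
  product sign C = -1; the one through e is not C, hence positive, so the other is negative.\<close>
lemma ear_closes_negative_circle:
  assumes q: "ear vs es"
  obtains Z where "is_circle E ends Z" "circ_sign \<sigma> Z = -1" "Z - C = set es" "e \<notin> Z"
proof -
  have xy: "hd vs \<noteq> last vs" and x: "hd vs \<in> VC" and y: "last vs \<in> VC"
    and es: "es \<noteq> []" using q by (auto simp: ear_def)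
  have esC: "set es \<inter> C = {}" using ear_disjoint_C[OF q] .
  have neg: "circ_sign \<sigma> (set es \<union> set esb) = -1 \<and> e \<notin> set es \<union> set esb"
    if a: "is_path C ends vsa esa" "hd vsa = hd vs" "last vsa = last vs"
      and b: "is_path C ends vsb esb" "hd vsb = hd vs" "last vsb = last vs"
      and ab: "set esa \<inter> set esb = {}" "set esa \<union> set esb = C" and ea: "e \<in> set esa"
    for vsa esa vsb esb
  proof -
    have Za: "is_circle E ends (set es \<union> set esa)" using ear_Un_C_path_is_circle[OF q a] .
    have Zb: "is_circle E ends (set es \<union> set esb)" using ear_Un_C_path_is_circle[OF q b] .
    have "sym_diff (set es \<union> set esa) (set es \<union> set esb) = C" using ab esC by blast
    then have prod: "circ_sign \<sigma> (set es \<union> set esa) * circ_sign \<sigma> (set es \<union> set esb) = -1"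
      using circ_sign_sym_diff_circles[OF Za Zb] C(2) by simp
    have "set es \<union> set esa \<noteq> C" using esC es by auto
    then have "circ_sign \<sigma> (set es \<union> set esa) \<noteq> -1" using neg_circle_through_e[OF Za] ea by blast
    then have "circ_sign \<sigma> (set es \<union> set esa) = 1" using circle_sign_cases[OF Za] by blast
    then show ?thesis using prod ea ab esC by auto
  qed
  obtain vs1 es1 vs2 es2 where sp: "is_path C ends vs1 es1" "is_path C ends vs2 es2"
    "hd vs1 = hd vs" "hd vs2 = hd vs" "last vs1 = last vs" "last vs2 = last vs"
    "set vs1 \<inter> set vs2 = {hd vs, last vs}" "set es1 \<inter> set es2 = {}" "set es1 \<union> set es2 = C"
    by (rule is_circle_split[OF graph C(1) x y xy])
  have "e \<in> set es1 \<or> e \<in> set es2" using sp(9) C(3) by blast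
  then obtain esb where "circ_sign \<sigma> (set es \<union> set esb) = -1" "e \<notin> set es \<union> set esb"
    "is_circle E ends (set es \<union> set esb)" "set esb \<subseteq> C"
    using neg[OF sp(1,3,5) sp(2,4,6) sp(8,9)] neg[OF sp(2,4,6) sp(1,3,5)] sp(8,9)
      ear_Un_C_path_is_circle[OF q sp(1,3,5)] ear_Un_C_path_is_circle[OF q sp(2,4,6)]
    by (metis Int_commute Un_commute Un_upper1 Un_upper2)
  moreover have "set es \<union> set esb - C = set es" if "set esb \<subseteq> C" for esb
    using that esC by blast
  ultimately show ?thesis using that by blast
qed

lemma vpath_off_C:
  assumes "vpath (adjacent ends E) vs" "\<forall>v\<in>set vs. v \<in> VC \<longrightarrow> v = last vs"
  shows "vpath (adjacent ends (E - C)) vs"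
  using assms(1) _ assms(2)
proof (rule vpath_inner_mono[where S = "{}"])
  show "adjacent ends (E - C) a b" if "adjacent ends E a b" "a \<notin> VC" for a b
    using that ends_subset_VC by (fastforce simp: adjacent_def)
qed simp

lemma ear_through_edge:
  assumes f: "f \<in> E - C" "ends f = {p, q}"
    and A: "vpath (adjacent ends E) A" "hd A = p" "last A \<in> VC" "\<forall>v\<in>set A. v \<in> VC \<longrightarrow> v = last A"
    and B: "vpath (adjacent ends E) B" "hd B = q" "last B \<in> VC" "\<forall>v\<in>set B. v \<in> VC \<longrightarrow> v = last B"
    and AB: "set A \<inter> set B = {}"
  obtains vs es where "ear vs es" "f \<in> set es"
proof -
  have Ane: "A \<noteq> []" and Bne: "B \<noteq> []" using A(1) B(1) by (auto simp: vpath_def)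
  have pq: "p \<noteq> q" "q \<notin> set A" using A(2) B(2) Ane Bne AB by (auto dest: hd_in_set)
  obtain esA where pA: "is_path (E - C) ends (rev A) esA"
    using vpath_adjacent_is_path vpath_rev[OF vpath_off_C[OF A(1,4)] adjacent_sym] by blast
  obtain esB where pB: "is_path (E - C) ends B esB"
    using vpath_adjacent_is_path vpath_off_C[OF B(1,4)] by blast
  have "is_path (E - C) ends [p, q] [f]" using f pq by (simp add: is_path_single_edge)
  then have "is_path (E - C) ends (rev A @ tl [p, q]) (esA @ [f])"
    using A(2) pq(2) by (intro is_path_append[OF pA]) (auto simp: last_rev)
  then have "is_path (E - C) ends ((rev A @ [q]) @ tl B) ((esA @ [f]) @ esB)"
    using B(2) AB by (intro is_path_append[OF _ pB]) auto
  moreover have "(rev A @ [q]) @ tl B = rev A @ B" using B(2) Bne by (cases B) auto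
  ultimately have P: "is_path (E - C) ends (rev A @ B) (esA @ f # esB)" by simp
  have "last A \<noteq> last B" using AB Ane Bne by (metis disjoint_iff last_in_set)
  then have "ear (rev A @ B) (esA @ f # esB)"
    unfolding ear_def using P A(3,4) B(3,4) Ane Bne by (auto simp: hd_rev)
  then show ?thesis using that by simp
qed

lemma edge_on_ear:
  assumes f: "f \<in> E" "f \<notin> C"
  obtains vs es where "ear vs es" "f \<in> set es"
proof -
  obtain p q where pq: "ends f = {p, q}" "p \<noteq> q" using edge_ends[OF f(1)] by blast
  obtain u v where uv: "ends e = {u, v}" "u \<noteq> v" using edge_ends C(3) C_subset by blast
  have sub: "{p, q} \<subseteq> V" "VC \<subseteq> V" "u \<in> VC" "v \<in> VC"
    using ends_subset[OF f(1)] pq verts_of_subset[OF graph C_subset] ends_subset_VC[OF C(3)] uv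
    by auto
  obtain A B where AB: "vpath_between (adjacent ends E) {p, q} VC A"
    "vpath_between (adjacent ends E) {p, q} VC B" "set A \<inter> set B = {}"
    "\<forall>x\<in>set A. x \<in> {p, q} \<longrightarrow> x = hd A" "\<forall>x\<in>set A. x \<in> VC \<longrightarrow> x = last A"
    "\<forall>x\<in>set B. x \<in> {p, q} \<longrightarrow> x = hd B" "\<forall>x\<in>set B. x \<in> VC \<longrightarrow> x = last B"
    by (rule block_two_disjoint_paths[OF sub(1) _ _ pq(2) sub(2-4) uv(2)]) auto
  have "hd A \<noteq> hd B" using AB(1-3) by (metis disjoint_iff hd_in_set vpath_def vpath_between_def)
  then consider "hd A = p" "hd B = q" | "hd A = q" "hd B = p"
    using AB(1,2) by (auto simp: vpath_between_def)
  then show ?thesis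
  proof cases
    case 1
    then show ?thesis using ear_through_edge[OF _ pq(1)] AB(1-3,5,7) f that
      by (auto simp: vpath_between_def)
  next
    case 2
    then show ?thesis using ear_through_edge[OF _ pq(1)[unfolded insert_commute]] AB(1-3,5,7) f that
      by (auto simp: vpath_between_def Int_commute)
  qed
qed

lemma other_arc_is_ear:
  assumes Z: "is_circle E ends Z" "f \<in> Z" "f \<notin> C"
    and a: "is_path Z ends vsa esa" and b: "is_path Z ends vsb esb"
    and hl: "hd vsa = t1" "hd vsb = t1" "last vsa = t2" "last vsb = t2" "t1 \<noteq> t2"
    and ab: "set vsa \<inter> set vsb = {t1, t2}" "set esa \<inter> set esb = {}" "set esa \<union> set esb = Z"
    and C_eq: "C = X \<union> set esa" and XZ: "X \<inter> Z = {}"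
    and VC: "VC \<subseteq> W \<union> set vsa" and WZ: "W \<inter> verts_of ends Z \<subseteq> {t1, t2}"
  shows "ear vsb esb" "f \<in> set esb" "Z - set esb \<subseteq> C"
proof -
  have bZ: "set esb \<subseteq> Z" using is_path_set[OF b] .
  have aC: "set esa \<subseteq> C" using C_eq by blast
  have "set esb \<inter> C = {}" using C_eq XZ bZ ab(2) by blast
  moreover have "Z \<subseteq> E" using Z(1) by (simp add: is_circle_def)
  ultimately have pb: "is_path (E - C) ends vsb esb" using bZ by (intro is_path_mono[OF b]) blast
  have "esa \<noteq> []" "esb \<noteq> []" using a b hl by auto
  then have vsa: "set vsa \<subseteq> VC" and vsb: "set vsb \<subseteq> verts_of ends Z"
    using is_path_verts_subset[OF is_path_mono[OF a aC]] is_path_verts_subset[OF b] by auto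
  have "t1 \<in> VC" "t2 \<in> VC"
    using vsa hl(1,3) hd_in_set[OF is_path_ne[OF a]] last_in_set[OF is_path_ne[OF a]] by blast+
  moreover have "\<forall>v\<in>set vsb. v \<in> VC \<longrightarrow> v = t1 \<or> v = t2"
    using VC WZ vsb ab(1) by blast
  ultimately show "ear vsb esb" unfolding ear_def using pb hl(2,4,5) by simp
  show "f \<in> set esb" "Z - set esb \<subseteq> C" using Z(2,3) ab(3) aC by blast+
qed

lemma vpath_off_circle_and_edge:
  assumes "vpath (adjacent ends E) vs" "\<forall>x\<in>set vs. x \<in> ends g \<longrightarrow> x = hd vs"
    "\<forall>x\<in>set vs. x \<in> verts_of ends Z \<longrightarrow> x = last vs"
  shows "vpath (adjacent ends (E - Z - {g})) vs"
  using assms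
proof (rule vpath_inner_mono)
  show "adjacent ends (E - Z - {g}) a b"
    if "adjacent ends E a b" "a \<notin> verts_of ends Z" "b \<notin> ends g" for a b
    using that by (fastforce simp: adjacent_def verts_of_def)
qed

lemma circle_through_e_and_arc:
  assumes Z: "is_circle E ends Z" "e \<notin> Z" and uv: "ends e = {u, v}"
    and A: "is_path (E - Z - {e}) ends A esA" "hd A = u"
      "\<forall>x\<in>set A. x \<in> verts_of ends Z \<longrightarrow> x = last A"
    and B: "is_path (E - Z - {e}) ends B esB" "last B = v"
      "\<forall>x\<in>set B. x \<in> verts_of ends Z \<longrightarrow> x = hd B"
    and AB: "set A \<inter> set B = {}"
    and arc: "is_path Z ends ws fs" "hd ws = last A" "last ws = hd B" "last A \<noteq> hd B"
  shows "is_circle E ends (insert e (set esA \<union> set fs \<union> set esB))"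
    "verts_of ends (insert e (set esA \<union> set fs \<union> set esB)) \<subseteq> set A \<union> set ws \<union> set B"
proof -
  have Ane: "A \<noteq> []" and Bne: "B \<noteq> []" and wne: "ws \<noteq> []"
    using is_path_ne A(1) B(1) arc(1) by blast+
  have fs: "fs \<noteq> []" using arc by auto
  have ws: "set ws \<subseteq> verts_of ends Z" using is_path_verts_subset[OF arc(1) fs] .
  have "Z \<subseteq> E" using Z(1) by (simp add: is_circle_def)
  then have "set fs \<subseteq> E" using is_path_set[OF arc(1)] by blast
  then have E: "is_path E ends A esA" "is_path E ends B esB" "is_path E ends ws fs"
    using is_path_set[OF A(1)] is_path_set[OF B(1)]
    by (blast intro: is_path_mono[OF A(1)], blast intro: is_path_mono[OF B(1)],
        blast intro: is_path_mono[OF arc(1)])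
  have "is_path E ends (A @ tl ws) (esA @ fs)"
    using A(3) arc(2) ws by (intro is_path_append[OF E(1) E(3)]) auto
  moreover have l1: "last (A @ tl ws) = hd B" using last_append_tl[OF wne Ane] arc(2,3) by simp
  moreover have "set (A @ tl ws) \<inter> set B \<subseteq> {hd B}"
    using AB B(3) ws arc(3) set_tl_subset[of ws] by fastforce
  ultimately have Q: "is_path E ends ((A @ tl ws) @ tl B) ((esA @ fs) @ esB)"
    by (intro is_path_append[OF _ E(2)])
  have hQ: "hd ((A @ tl ws) @ tl B) = u" using Ane A(2) by simp
  have lQ: "last ((A @ tl ws) @ tl B) = v" using last_append_tl[OF Bne _ l1] Ane B(2) by simp
  have uv': "u \<noteq> v" using AB A(2) B(2) Ane Bne by (metis disjoint_iff hd_in_set last_in_set)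
  have "is_path E ends [u, v] [e]" using uv uv' C(3) C_subset by (auto simp: is_path_single_edge)
  moreover have "set ((esA @ fs) @ esB) \<inter> set [e] = {}"
    using is_path_set[OF A(1)] is_path_set[OF B(1)] is_path_set[OF arc(1)] Z(2) by auto
  ultimately have "is_circle E ends (set ((esA @ fs) @ esB) \<union> set [e])"
    by (intro is_circle_Un_paths[OF Q]) (use hQ lQ uv' in auto)
  then show "is_circle E ends (insert e (set esA \<union> set fs \<union> set esB))" by (simp add: Un_ac)
  have "verts_of ends (set ((esA @ fs) @ esB)) = set ((A @ tl ws) @ tl B)"
    using is_path_verts[OF Q] fs by simp
  also have "\<dots> \<subseteq> set A \<union> set ws \<union> set B" using set_tl_subset[of ws] set_tl_subset[of B] by auto
  finally show "verts_of ends (insert e (set esA \<union> set fs \<union> set esB)) \<subseteq> set A \<union> set ws \<union> set B"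
    using uv A(2) B(2) Ane Bne by (auto simp: verts_of_def)
qed

text \<open>Two disjoint paths from the ends of e to Z, together with e and either arc of Z between
  their ends, form two circles whose symmetric difference is Z; as Z is negative, one of them is
  negative and therefore equal to C, and the other arc is the required ear.\<close>
lemma neg_circle_ear_from_paths:
  assumes Z: "is_circle E ends Z" "circ_sign \<sigma> Z = -1" "f \<in> Z" "f \<notin> C" and eZ: "e \<notin> Z"
    and uv: "ends e = {u, v}"
    and A: "vpath (adjacent ends E) A" "hd A = u" "last A \<in> verts_of ends Z"
      "\<forall>x\<in>set A. x \<in> ends e \<longrightarrow> x = hd A" "\<forall>x\<in>set A. x \<in> verts_of ends Z \<longrightarrow> x = last A"
    and B: "vpath (adjacent ends E) B" "hd B = v" "last B \<in> verts_of ends Z"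
      "\<forall>x\<in>set B. x \<in> ends e \<longrightarrow> x = hd B" "\<forall>x\<in>set B. x \<in> verts_of ends Z \<longrightarrow> x = last B"
    and AB: "set A \<inter> set B = {}"
  obtains vs es where "ear vs es" "f \<in> set es" "set es \<subseteq> Z" "Z - set es \<subseteq> C"
proof -
  have Ane: "A \<noteq> []" and Bne: "B \<noteq> []" using A(1) B(1) by (auto simp: vpath_def)
  define t1 where "t1 = last A"
  define t2 where "t2 = last B"
  have t12: "t1 \<noteq> t2" using AB Ane Bne unfolding t1_def t2_def by (metis disjoint_iff last_in_set)
  obtain esA where pA: "is_path (E - Z - {e}) ends A esA"
    using vpath_adjacent_is_path vpath_off_circle_and_edge[OF A(1,4,5)] by blast
  obtain esB where pB: "is_path (E - Z - {e}) ends (rev B) esB"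
    using vpath_adjacent_is_path vpath_rev[OF vpath_off_circle_and_edge[OF B(1,4,5)] adjacent_sym]
    by blast
  obtain vs1 es1 vs2 es2 where sp: "is_path Z ends vs1 es1" "is_path Z ends vs2 es2"
    "hd vs1 = t1" "hd vs2 = t1" "last vs1 = t2" "last vs2 = t2" "set vs1 \<inter> set vs2 = {t1, t2}"
    "set es1 \<inter> set es2 = {}" "set es1 \<union> set es2 = Z"
    by (rule is_circle_split[OF graph Z(1) A(3)[folded t1_def] B(3)[folded t2_def] t12])
  define X where "X = insert e (set esA \<union> set esB)"
  have XZ: "X \<inter> Z = {}" using is_path_set[OF pA] is_path_set[OF pB] eZ unfolding X_def by blast
  have rB: "last (rev B) = v" "\<forall>x\<in>set (rev B). x \<in> verts_of ends Z \<longrightarrow> x = hd (rev B)"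
    "set A \<inter> set (rev B) = {}" "t2 = hd (rev B)" "t1 \<noteq> hd (rev B)"
    using B(2,5) AB Bne t12 by (auto simp: last_rev hd_rev t2_def)
  have W: "is_circle E ends (X \<union> set fs)" "verts_of ends (X \<union> set fs) \<subseteq> set A \<union> set ws \<union> set B"
    if "is_path Z ends ws fs" "hd ws = t1" "last ws = t2" for ws fs
    using circle_through_e_and_arc[OF Z(1) eZ uv pA A(2,5) pB rB(1-3) that(1)] that(2,3) rB(4,5)
    unfolding X_def t1_def by (auto simp: Un_ac)
  have "sym_diff (X \<union> set es1) (X \<union> set es2) = Z" using sp(8,9) XZ by blast
  then have "circ_sign \<sigma> (X \<union> set es1) * circ_sign \<sigma> (X \<union> set es2) = -1"
    using circ_sign_sym_diff_circles[OF W(1)[OF sp(1,3,5)] W(1)[OF sp(2,4,6)]] Z(2) by simp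
  then have "circ_sign \<sigma> (X \<union> set es1) = -1 \<or> circ_sign \<sigma> (X \<union> set es2) = -1"
    using circle_sign_cases[OF W(1)[OF sp(1,3,5)]] by auto
  then consider "C = X \<union> set es1" | "C = X \<union> set es2"
    using neg_circle_through_e W(1)[OF sp(1,3,5)] W(1)[OF sp(2,4,6)] unfolding X_def by blast
  moreover have WZ: "(set A \<union> set B) \<inter> verts_of ends Z \<subseteq> {t1, t2}"
    using A(5) B(5) unfolding t1_def t2_def by blast
  ultimately show ?thesis
  proof cases
    case 1
    then have "VC \<subseteq> (set A \<union> set B) \<union> set vs1" using W(2)[OF sp(1,3,5)] by (simp add: Un_ac)
    then have "ear vs2 es2" "f \<in> set es2" "Z - set es2 \<subseteq> C"
      using other_arc_is_ear[OF Z(1,3,4) sp(1-6) t12 sp(7-9) 1 XZ _ WZ] by blast+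
    then show ?thesis using that is_path_set[OF sp(2)] by blast
  next
    case 2
    then have "VC \<subseteq> (set A \<union> set B) \<union> set vs2" using W(2)[OF sp(2,4,6)] by (simp add: Un_ac)
    moreover have "set vs2 \<inter> set vs1 = {t1, t2}" "set es2 \<inter> set es1 = {}" "set es2 \<union> set es1 = Z"
      using sp(7,8,9) by blast+
    ultimately have "ear vs1 es1" "f \<in> set es1" "Z - set es1 \<subseteq> C"
      using other_arc_is_ear[OF Z(1,3,4) sp(2,1,4,3,6,5) t12 _ _ _ 2 XZ _ WZ] by blast+
    then show ?thesis using that is_path_set[OF sp(1)] by blast
  qed
qed

lemma circles_eq_if_agree_off_C:
  assumes Z: "is_circle E ends Z" "is_circle E ends Z'" "e \<notin> Z" "e \<notin> Z'" and eq: "Z - C = Z' - C"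
  shows "Z = Z'"
proof -
  have "finite Z" "finite Z'" using Z(1,2) by (simp_all add: is_circle_def)
  then have "even_degrees ends (sym_diff Z Z')"
    using even_degrees_sym_diff is_circle_even_degrees[OF Z(1)] is_circle_even_degrees[OF Z(2)] by blast
  moreover have "sym_diff Z Z' \<subseteq> C" "e \<notin> sym_diff Z Z'" using eq Z(3,4) by blast+
  ultimately have "sym_diff Z Z' = {}" using even_degrees_subset_circle[OF C(1) _ _ C(3)] by blast
  then show ?thesis by blast
qed

lemma negative_circle_ear:
  assumes Z: "is_circle E ends Z" "circ_sign \<sigma> Z = -1" "f \<in> Z" "f \<notin> C"
  obtains vs es where "ear vs es" "f \<in> set es" "Z - C = set es"
proof -
  have eZ: "e \<notin> Z" using neg_circle_through_e Z by blast
  have ZE: "Z \<subseteq> E" using Z(1) by (simp add: is_circle_def)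
  obtain u v where uv: "ends e = {u, v}" "u \<noteq> v" using edge_ends C(3) C_subset by blast
  obtain f1 f2 where f12: "ends f = {f1, f2}" "f1 \<noteq> f2" using edge_ends Z(3) ZE by blast
  have sub: "{u, v} \<subseteq> V" "verts_of ends Z \<subseteq> V" "f1 \<in> verts_of ends Z" "f2 \<in> verts_of ends Z"
    using ends_subset uv C(3) C_subset verts_of_subset[OF graph ZE] f12 Z(3)
    by (auto simp: verts_of_def)
  obtain A B where AB: "vpath_between (adjacent ends E) {u, v} (verts_of ends Z) A"
    "vpath_between (adjacent ends E) {u, v} (verts_of ends Z) B" "set A \<inter> set B = {}"
    "\<forall>x\<in>set A. x \<in> {u, v} \<longrightarrow> x = hd A" "\<forall>x\<in>set A. x \<in> verts_of ends Z \<longrightarrow> x = last A"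
    "\<forall>x\<in>set B. x \<in> {u, v} \<longrightarrow> x = hd B" "\<forall>x\<in>set B. x \<in> verts_of ends Z \<longrightarrow> x = last B"
    by (rule block_two_disjoint_paths[OF sub(1) _ _ uv(2) sub(2-4) f12(2)]) auto
  have "hd A \<noteq> hd B" using AB(1-3) by (metis disjoint_iff hd_in_set vpath_def vpath_between_def)
  then consider "hd A = u" "hd B = v" | "hd A = v" "hd B = u"
    using AB(1,2) by (auto simp: vpath_between_def)
  moreover have A: "vpath (adjacent ends E) A" "last A \<in> verts_of ends Z"
    "\<forall>x\<in>set A. x \<in> ends e \<longrightarrow> x = hd A"
    and B: "vpath (adjacent ends E) B" "last B \<in> verts_of ends Z"
    "\<forall>x\<in>set B. x \<in> ends e \<longrightarrow> x = hd B"
    using AB(1,2,4,6) uv(1) by (simp_all add: vpath_between_def)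
  ultimately obtain vs es where "ear vs es" "f \<in> set es" "set es \<subseteq> Z" "Z - set es \<subseteq> C"
  proof cases
    case 1
    show ?thesis
      by (rule neg_circle_ear_from_paths[OF Z eZ uv(1) A(1) 1(1) A(2,3) AB(5) B(1) 1(2) B(2,3) AB(7,3)])
        (rule that)
  next
    case 2
    have "set B \<inter> set A = {}" using AB(3) by blast
    then show ?thesis
      by (rule neg_circle_ear_from_paths[OF Z eZ uv(1) B(1) 2(2) B(2,3) AB(7) A(1) 2(1) A(2,3) AB(5)])
        (rule that)
  qed
  moreover from this(1) have "set es \<inter> C = {}" by (rule ear_disjoint_C)
  ultimately have "Z - C = set es" by blast
  with \<open>ear vs es\<close> \<open>f \<in> set es\<close> show ?thesis by (rule that)
qed

lemma neg_battery_iff_ears_agree: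
  assumes f: "f \<in> E" "f \<notin> C"
  shows "neg_battery E ends \<sigma> f \<longleftrightarrow>
    (\<forall>vs es vs' es'. ear vs es \<longrightarrow> f \<in> set es \<longrightarrow> ear vs' es' \<longrightarrow> f \<in> set es' \<longrightarrow> set es = set es')"
    (is "_ \<longleftrightarrow> ?agree")
proof
  assume nb: "neg_battery E ends \<sigma> f"
  show ?agree
  proof (intro allI impI)
    fix vs es vs' es' assume q: "ear vs es" "f \<in> set es" "ear vs' es'" "f \<in> set es'"
    obtain Z where Z: "is_circle E ends Z" "circ_sign \<sigma> Z = -1" "Z - C = set es"
      using ear_closes_negative_circle[OF q(1)] by blast
    obtain Z' where Z': "is_circle E ends Z'" "circ_sign \<sigma> Z' = -1" "Z' - C = set es'"
      using ear_closes_negative_circle[OF q(3)] by blast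
    obtain Y where Y: "\<And>W. is_circle E ends W \<Longrightarrow> circ_sign \<sigma> W = -1 \<Longrightarrow> f \<in> W \<Longrightarrow> W = Y"
      using nb unfolding neg_battery_def by (elim ex1E) blast
    have "f \<in> Z" "f \<in> Z'" using Z(3) Z'(3) q(2,4) by blast+
    then have "Z = Z'" using Y Z(1,2) Z'(1,2) by metis
    then show "set es = set es'" using Z(3) Z'(3) by simp
  qed
next
  assume agree: ?agree
  obtain vs es where q: "ear vs es" "f \<in> set es" using edge_on_ear[OF f] .
  obtain Z0 where Z0: "is_circle E ends Z0" "circ_sign \<sigma> Z0 = -1" "Z0 - C = set es" "e \<notin> Z0"
    using ear_closes_negative_circle[OF q(1)] .
  show "neg_battery E ends \<sigma> f" unfolding neg_battery_def
  proof (rule ex1I[of _ Z0])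
    show "is_circle E ends Z0 \<and> circ_sign \<sigma> Z0 = -1 \<and> f \<in> Z0" using Z0(1-3) q(2) by blast
  next
    fix Z assume Z: "is_circle E ends Z \<and> circ_sign \<sigma> Z = -1 \<and> f \<in> Z"
    then obtain vs' es' where "ear vs' es'" "f \<in> set es'" "Z - C = set es'"
      using negative_circle_ear f(2) by blast
    then have "Z - C = Z0 - C" using agree q Z0(3) by blast
    moreover have "e \<notin> Z" using neg_circle_through_e Z f(2) by blast
    ultimately show "Z = Z0" using circles_eq_if_agree_off_C Z Z0(1,4) by blast
  qed
qed

abbreviation bridge_component where "bridge_component f \<equiv> bridge_comp V E ends C f"
abbreviation bridge where "bridge f \<equiv> bridge_edges V E ends C f"
abbreviation attach where "attach f \<equiv> attachments V E ends C f"

lemma ear_inner_vertex: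
  assumes q: "ear vs es" and j: "0 < j" "j < length es"
  shows "vs ! j \<notin> VC"
proof -
  have P: "is_path (E - C) ends vs es" using q by (simp add: ear_def)
  have "vs ! j \<noteq> hd vs" "vs ! j \<noteq> last vs" "vs ! j \<in> set vs"
    using is_path_distinct[OF P] is_path_len[OF P] is_path_hd[OF P] is_path_last[OF P] j
    by (auto simp: nth_eq_iff_index_eq)
  then show ?thesis using q unfolding ear_def by blast
qed

lemma ear_vertex_off_C:
  assumes q: "ear vs es" and x: "x \<in> set vs" "x \<notin> VC"
  obtains k where "0 < k" "k < length es" "vs ! k = x"
proof -
  have P: "is_path (E - C) ends vs es" and hl: "hd vs \<in> VC" "last vs \<in> VC"
    using q by (auto simp: ear_def)
  obtain k where k: "k < Suc (length es)" "vs ! k = x"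
    using x(1) is_path_len[OF P] by (metis in_set_conv_nth)
  moreover have "x \<noteq> hd vs" "x \<noteq> last vs" using x(2) hl by auto
  then have "k \<noteq> 0" "k \<noteq> length es" using k is_path_hd[OF P] is_path_last[OF P] by metis+
  ultimately show ?thesis using that by simp
qed

lemma ear_inner_connected:
  assumes q: "ear vs es" and ij: "0 < i" "i \<le> j" "j < length es"
  shows "(vs ! i, vs ! j) \<in> (adj_avoid E ends VC)\<^sup>*"
  using ij
proof (induction j)
  case (Suc m)
  show ?case
  proof (cases "i = Suc m")
    case False
    then have "(vs ! i, vs ! m) \<in> (adj_avoid E ends VC)\<^sup>*" using Suc by simp
    moreover have "es ! m \<in> E" "ends (es ! m) = {vs ! m, vs ! Suc m}"
      using is_path_edge[of "E - C" ends vs es m] q Suc.prems by (auto simp: ear_def)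
    moreover have "vs ! m \<notin> VC" "vs ! Suc m \<notin> VC"
      using ear_inner_vertex[OF q] False Suc.prems by auto
    ultimately show ?thesis by (auto simp: adj_avoid_def intro: rtrancl_into_rtrancl)
  qed simp
qed simp

lemma ear_through_chord:
  assumes f: "ends f \<subseteq> VC" and q: "ear vs es" "f \<in> set es"
  shows "es = [f]"
proof -
  have P: "is_path (E - C) ends vs es" using q by (simp add: ear_def)
  obtain i where i: "i < length es" "es ! i = f" using q(2) by (metis in_set_conv_nth)
  then have "ends f = {vs ! i, vs ! Suc i}" using is_path_edge[OF P, of i] by simp
  then have "i = 0" "Suc i = length es" using ear_inner_vertex[OF q(1)] f i
    by (metis insert_subset neq0_conv, metis insert_subset Suc_lessI zero_less_Suc)
  then show ?thesis using i by (cases es) auto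
qed

lemma ear_end_off_C:
  assumes f: "\<not> ends f \<subseteq> VC" and q: "ear vs es" "f \<in> set es"
  obtains k where "0 < k" "k < length es" "vs ! k \<in> ends f"
proof -
  have P: "is_path (E - C) ends vs es" using q by (simp add: ear_def)
  obtain x0 where x0: "x0 \<in> ends f" "x0 \<notin> VC" using f by blast
  moreover have "es \<noteq> []" using q(2) by auto
  then have "x0 \<in> set vs" using x0(1) q(2) is_path_verts[OF P] by (auto simp: verts_of_def)
  ultimately show ?thesis using ear_vertex_off_C[OF q(1)] that by metis
qed

lemma ear_inner_in_bridge_component:
  assumes f: "\<not> ends f \<subseteq> VC" and q: "ear vs es" "f \<in> set es" and j: "0 < j" "j < length es"
  shows "vs ! j \<in> bridge_component f"
proof -
  have P: "is_path (E - C) ends vs es" using q by (simp add: ear_def)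
  obtain k where k: "0 < k" "k < length es" "vs ! k \<in> ends f" by (rule ear_end_off_C[OF f q])
  have "(vs ! k, vs ! j) \<in> (adj_avoid E ends VC)\<^sup>*"
  proof (cases "k \<le> j")
    case True
    then show ?thesis using ear_inner_connected[OF q(1) k(1)] j(2) by blast
  next
    case False
    then have "(vs ! j, vs ! k) \<in> (adj_avoid E ends VC)\<^sup>*"
      using ear_inner_connected[OF q(1) j(1)] k(2) by simp
    then show ?thesis by (rule adj_avoid_rtrancl_sym)
  qed
  moreover have "vs ! j \<in> V" using is_path_edge[OF P, of j] j ends_subset by auto
  ultimately show ?thesis
    using ear_inner_vertex[OF q(1) j] ear_inner_vertex[OF q(1) k(1,2)] k(3)
    by (auto simp: bridge_comp_def)
qed

lemma ear_edges_in_bridge: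
  assumes f: "f \<notin> C" and q: "ear vs es" "f \<in> set es"
  shows "set es \<subseteq> bridge f"
proof (cases "ends f \<subseteq> VC")
  case True
  then show ?thesis using ear_through_chord[OF True q] by (simp add: bridge_edges_def)
next
  case False
  have P: "is_path (E - C) ends vs es" using q by (simp add: ear_def)
  obtain k where k: "0 < k" "k < length es" by (rule ear_end_off_C[OF False q])
  have "es ! m \<in> bridge f" if m: "m < length es" for m
  proof -
    have "vs ! m \<in> bridge_component f \<or> vs ! Suc m \<in> bridge_component f"
      using ear_inner_in_bridge_component[OF False q] m k by (cases m) auto
    moreover have "es ! m \<in> E - C" "ends (es ! m) = {vs ! m, vs ! Suc m}"
      using is_path_edge[OF P m] by auto
    ultimately show ?thesis using False by (auto simp: bridge_edges_def)
  qed
  then show ?thesis by (auto simp: in_set_conv_nth)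
qed

lemma ear_in_paths_through:
  assumes f: "f \<notin> C" and q: "ear vs es" "f \<in> set es"
  shows "set es \<in> paths_through V E ends C f"
proof -
  have P: "is_path (E - C) ends vs es" and hl: "hd vs \<noteq> last vs" "hd vs \<in> VC" "last vs \<in> VC"
    using q by (auto simp: ear_def)
  have D: "set es \<subseteq> bridge f" using ear_edges_in_bridge[OF f q] .
  have "es \<noteq> []" using q(2) by auto
  then have "verts_of ends (set es) = set vs" by (rule is_path_verts[OF P])
  then have "hd vs \<in> verts_of ends (set es)" "last vs \<in> verts_of ends (set es)"
    using is_path_ne[OF P] by auto
  then have "hd vs \<in> attach f" "last vs \<in> attach f"
    using D hl(2,3) by (auto simp: attachments_def verts_of_def)
  moreover have "is_path (bridge f) ends vs es" using is_path_mono[OF P D] .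
  ultimately show ?thesis unfolding paths_through_def using hl(1) by blast
qed

lemma ear_reroute:
  assumes q: "ear vs es" and i: "i < k" "es ! i = f" and k: "0 < k" "k < length es"
    and T: "vpath (adjacent ends (E - C)) (vs ! k # rs @ [w])"
    and rs: "set rs \<inter> set vs = {}" "set rs \<inter> VC = {}" and w: "w \<in> VC" "w \<notin> set vs"
  obtains vs' es' where "ear vs' es'" "f \<in> set es'" "set es' \<noteq> set es"
proof -
  have P: "is_path (E - C) ends vs es" and hl: "hd vs \<in> VC" using q by (auto simp: ear_def)
  have lv: "length vs = Suc (length es)" using is_path_len[OF P] .
  obtain esT where pT: "is_path (E - C) ends (vs ! k # rs @ [w]) esT"
    using vpath_adjacent_is_path[OF T] by blast
  have "is_path (E - C) ends (take (Suc k) vs) (take k es)" using is_path_take[OF P] k by simp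
  moreover have "last (take (Suc k) vs) = vs ! k" using k lv by (simp add: take_Suc_conv_app_nth)
  moreover have "set (take (Suc k) vs) \<subseteq> set vs" by (rule set_take_subset)
  ultimately have "is_path (E - C) ends (take (Suc k) vs @ tl (vs ! k # rs @ [w])) (take k es @ esT)"
    using rs(1) w(2) by (intro is_path_append[OF _ pT]) auto
  then have P': "is_path (E - C) ends (take (Suc k) vs @ rs @ [w]) (take k es @ esT)" by simp
  define vs' where "vs' = take (Suc k) vs @ rs @ [w]"
  have h': "hd vs' = hd vs" using lv unfolding vs'_def by (cases vs) auto
  have l': "last vs' = w" unfolding vs'_def by simp
  have "hd vs \<noteq> w" using w(2) is_path_ne[OF P] by auto
  moreover have "v = hd vs' \<or> v = last vs'" if v: "v \<in> set vs'" "v \<in> VC" for v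
  proof (cases "v \<in> set (take (Suc k) vs)")
    case True
    then obtain j where "j < Suc k" "vs ! j = v" using k lv by (auto simp: in_set_conv_nth)
    then have "j = 0" using ear_inner_vertex[OF q, of j] k v(2) by (cases j) auto
    then show ?thesis using \<open>vs ! j = v\<close> is_path_hd[OF P] h' by simp
  next
    case False
    then show ?thesis using v rs(2) l' by (auto simp: vs'_def)
  qed
  ultimately have e': "ear vs' (take k es @ esT)" unfolding ear_def using P' h' l' hl w(1) vs'_def by simp
  have fin: "f \<in> set (take k es @ esT)" using i k by (auto simp: in_set_conv_nth intro!: exI[of _ i])
  have "take k es @ esT \<noteq> []" using fin by (metis empty_iff list.set(1))
  then have "w \<in> verts_of ends (set (take k es @ esT))" using is_path_verts[OF P'] k by simp
  moreover have "es \<noteq> []" using k by auto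
  then have "w \<notin> verts_of ends (set es)" using is_path_verts[OF P] w(2) by simp
  ultimately have "set (take k es @ esT) \<noteq> set es" by auto
  then show ?thesis using that e' fin by blast
qed

text \<open>An attachment w of the bridge of f that is not an end of an ear through f is reached from
  f inside the bridge; following that route from the last vertex where it leaves the ear gives a
  second ear through f, ending at w.\<close>
lemma ear_through_other_attachment:
  assumes f: "\<not> ends f \<subseteq> VC" and q: "ear vs es" "f \<in> set es"
    and w: "w \<in> attach f" "w \<noteq> hd vs" "w \<noteq> last vs"
  obtains vs' es' where "ear vs' es'" "f \<in> set es'" "set es' \<noteq> set es"
proof -
  define n where "n = length es"
  have P: "is_path (E - C) ends vs es" using q(1) by (simp add: ear_def)
  have wVC: "w \<in> VC" using w(1) by (auto simp: attachments_def)
  obtain g where g: "g \<in> bridge f" "w \<in> ends g" using w(1) by (auto simp: attachments_def verts_of_def)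
  have gE: "g \<in> E - C" "ends g \<inter> bridge_component f \<noteq> {}" using g(1) f by (auto simp: bridge_edges_def)
  obtain w' where w': "w' \<noteq> w" "ends g = {w, w'}" using graph_other_end[OF graph _ g(2)] gE(1) by blast
  have "w \<notin> bridge_component f" using wVC by (auto simp: bridge_comp_def)
  then have "w' \<in> bridge_component f" using gE(2) w' by auto
  then obtain x1 where x1: "x1 \<in> ends f" "x1 \<notin> VC" "(x1, w') \<in> (adj_avoid E ends VC)\<^sup>*"
    by (auto simp: bridge_comp_def)
  obtain P0 where P0: "vpath (\<lambda>a b. (a, b) \<in> adj_avoid E ends VC) P0" "hd P0 = x1" "last P0 = w'"
    "set P0 \<subseteq> insert x1 (Range (adj_avoid E ends VC))" by (rule rtrancl_imp_vpath[OF x1(3)])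
  have P0VC: "set P0 \<inter> VC = {}" using P0(4) x1(2) by (auto simp: adj_avoid_def)
  obtain i where i: "i < n" "es ! i = f" using q(2) n_def by (metis in_set_conv_nth)
  have "x1 \<in> set vs" using x1(1) is_path_edge[OF P, of i] i n_def is_path_len[OF P] by auto
  then have "\<exists>z\<in>set P0. z \<in> set vs" using P0(1,2) by (metis hd_in_set vpath_def)
  then obtain r1 p r2 where P0e: "P0 = r1 @ p # r2" and p: "p \<in> set vs"
    and r2: "set r2 \<inter> set vs = {}"
    using split_list_last_prop[of P0 "\<lambda>z. z \<in> set vs"] by blast
  have pVC: "p \<notin> VC" "set r2 \<inter> VC = {}" using P0VC P0e by auto
  obtain k where k: "0 < k" "k < n" "vs ! k = p" using ear_vertex_off_C[OF q(1) p pVC(1)] n_def by blast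
  have "vpath (\<lambda>a b. (a, b) \<in> adj_avoid E ends VC) (p # r2)"
    using vpath_suffix[of _ r1 "p # r2"] P0(1) P0e by simp
  then have "vpath (adjacent ends (E - C)) (p # r2)"
    by (rule vpath_mono) (use ends_subset_VC in \<open>fastforce simp: adj_avoid_def adjacent_def\<close>)
  moreover have "adjacent ends (E - C) (last (p # r2)) w"
    using P0(3) P0e gE(1) w' by (auto simp: adjacent_def insert_commute)
  moreover have "w \<notin> set (p # r2)" using pVC wVC by auto
  ultimately have T: "vpath (adjacent ends (E - C)) (p # r2 @ [w])" using vpath_snoc by fastforce
  have wv: "w \<notin> set vs" using q(1) w(2,3) wVC unfolding ear_def by blast
  show ?thesis
  proof (cases "i < k")
    case True
    show ?thesis by (rule ear_reroute[OF q(1) True i(2) k(1) k(2)[unfolded n_def]])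
      (use T k(3) r2 pVC(2) wVC wv that in auto)
  next
    case False
    have idx: "rev es ! (n - 1 - i) = f" "rev vs ! (n - k) = p"
      using i k n_def is_path_len[OF P] by (simp_all add: rev_nth)
    have ik: "n - 1 - i < n - k" "0 < n - k" "n - k < length (rev es)"
      using False i(1) k n_def by auto
    have T': "vpath (adjacent ends (E - C)) (rev vs ! (n - k) # r2 @ [w])" using T idx(2) by simp
    have r2': "set r2 \<inter> set (rev vs) = {}" and wv': "w \<notin> set (rev vs)" using r2 wv by auto
    obtain vs' es' where "ear vs' es'" "f \<in> set es'" "set es' \<noteq> set (rev es)"
      by (rule ear_reroute[OF ear_rev[OF q(1)] ik(1) idx(1) ik(2,3) T' r2' pVC(2) wVC wv'])
    then show ?thesis using that by simp
  qed
qed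

lemma bridge_subset: "f \<in> E \<Longrightarrow> f \<notin> C \<Longrightarrow> bridge f \<subseteq> E - C"
  by (auto simp: bridge_edges_def)

lemma path_through_chord:
  assumes f: "ends f \<subseteq> VC" and p: "is_path (bridge f) ends ws fs" "f \<in> set fs"
  obtains a b where "ws = [a, b]"
proof -
  have "set fs = {f}" using f p is_path_set[OF p(1)] by (auto simp: bridge_edges_def)
  then have "length fs = 1" using distinct_card[OF is_path_distinct_es[OF p(1)]] by simp
  then show ?thesis using is_path_len[OF p(1)] that by (auto simp: length_Suc_conv numeral_2_eq_2)
qed

lemma path_through_is_ear:
  assumes f: "f \<in> E" "f \<notin> C" and nb: "neg_battery E ends \<sigma> f"
    and p: "is_path (bridge f) ends ws fs" "hd ws \<noteq> last ws" "hd ws \<in> attach f" "last ws \<in> attach f"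
      "f \<in> set fs"
  shows "ear ws fs"
proof -
  obtain vs es where q: "ear vs es" "f \<in> set es" using edge_on_ear[OF f] .
  have agree: "set es' = set es" if "ear vs' es'" "f \<in> set es'" for vs' es'
    using nb neg_battery_iff_ears_agree[OF f] q that by blast
  have "\<forall>x\<in>set ws. x \<in> VC \<longrightarrow> x = hd ws \<or> x = last ws"
  proof (rule ccontr)
    assume "\<not> ?thesis"
    then obtain x where x: "x \<in> set ws" "x \<in> VC" "x \<noteq> hd ws" "x \<noteq> last ws" by blast
    have fs: "fs \<noteq> []" using p(5) by auto
    have "set ws \<subseteq> verts_of ends (bridge f)" using is_path_verts_subset[OF p(1) fs] .
    then have xA: "x \<in> attach f" using x by (auto simp: attachments_def)
    show False
    proof (cases "ends f \<subseteq> VC")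
      case True
      then obtain a b where "ws = [a, b]" using path_through_chord p(1,5) by blast
      then show False using x by auto
    next
      case False
      have "\<exists>w\<in>{hd ws, last ws, x}. w \<noteq> hd vs \<and> w \<noteq> last vs" using p(2) x(3,4) by auto
      then obtain w where w: "w \<in> attach f" "w \<noteq> hd vs" "w \<noteq> last vs" using p(3,4) xA by blast
      obtain vs' es' where "ear vs' es'" "f \<in> set es'" "set es' \<noteq> set es"
        by (rule ear_through_other_attachment[OF False q w])
      then show False using agree by blast
    qed
  qed
  moreover have "is_path (E - C) ends ws fs"
    using is_path_mono[OF p(1)] is_path_set[OF p(1)] bridge_subset[OF f] by blast
  moreover have "hd ws \<in> VC" "last ws \<in> VC" using p(3,4) by (auto simp: attachments_def)
  ultimately show ?thesis unfolding ear_def using p(2) by blast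
qed

end

theorem mainTheorem4:
  fixes V :: "'v set" and E :: "'e set" and ends :: "'e \<Rightarrow> 'v set"
    and \<sigma> :: "'e \<Rightarrow> int" and e f :: 'e and C :: "'e set"
  assumes "signed_graph V E ends \<sigma>"
    and "is_block V E ends"
    and "card E \<noteq> 1"
    and "\<not> is_circle E ends E"
    and "neg_battery_circ E ends \<sigma> e C"
    and "f \<in> E" and "f \<notin> C"
  shows "neg_battery E ends \<sigma> f \<longleftrightarrow>
         (\<exists>!P. P \<in> paths_through V E ends C f \<and> f \<in> P)"
proof -
  interpret neg_battery_block V E ends \<sigma> e C using assms(1,2,5) by unfold_locales
  obtain vs es where q: "ear vs es" "f \<in> set es" using edge_on_ear[OF assms(6,7)] .
  have q_through: "set es \<in> paths_through V E ends C f" using ear_in_paths_through[OF assms(7) q] .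
  show ?thesis
  proof
    assume nb: "neg_battery E ends \<sigma> f"
    then have agree: "\<And>vs' es'. ear vs' es' \<Longrightarrow> f \<in> set es' \<Longrightarrow> set es' = set es"
      using neg_battery_iff_ears_agree[OF assms(6,7)] q by blast
    show "\<exists>!P. P \<in> paths_through V E ends C f \<and> f \<in> P"
    proof (rule ex1I[of _ "set es"])
      fix P assume "P \<in> paths_through V E ends C f \<and> f \<in> P"
      then obtain ws fs where "P = set fs" "is_path (bridge f) ends ws fs" "hd ws \<noteq> last ws"
        "hd ws \<in> attach f" "last ws \<in> attach f" "f \<in> set fs"
        unfolding paths_through_def by blast
      then show "P = set es" using path_through_is_ear[OF assms(6,7) nb] agree by blast
    qed (use q_through q(2) in blast)
  next
    assume unique: "\<exists>!P. P \<in> paths_through V E ends C f \<and> f \<in> P"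
    show "neg_battery E ends \<sigma> f" unfolding neg_battery_iff_ears_agree[OF assms(6,7)]
      using unique ear_in_paths_through[OF assms(7)] by blast
  qed
qed

end
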